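(* Let $\Lambda$ be a finite-dimensional algebra over an algebraically closed field $K$ and let $\Lambda\twoheadrightarrow\Lambda'$ be a surjective algebra homomorphism. Suppose there exist a dimension vector $\mathbf{d}'$ and $\theta'\in K_0(\mathrm{proj}\,\Lambda')$ such that there are infinitely many isomorphism classes of $\theta'$-stable $\Lambda'$-modules of dimension vector $\mathbf{d}'$. Then there exist a dimension vector $\mathbf{d}$ and $\theta\in K_0(\mathrm{proj}\,\Lambda)$ such that there are infinitely many isomorphism classes of $\theta$-stable $\Lambda$-modules of dimension vector $\mathbf{d}$.
   Context: Modules are finite-dimensional right modules; $\Lambda'$-modules are regarded as $\Lambda$-modules by restriction along the surjection. $K_0(\mathrm{proj}\,\Lambda)\cong K_0(\mathrm{mod}\,\Lambda)\cong\mathbb{Z}^n$ via indecomposable projectives and simples; the dimension vector of $M$ is $[M]\in K_0(\mathrm{mod}\,\Lambda)$; $\langle-,-\rangle$ is the canonical pairing ($\langle[P],[M]\rangle=\dim\mathrm{Hom}_\Lambda(P,M)$). For $\theta\in K_0(\mathrm{proj}\,\Lambda)$, $M$ is $\theta$-stable if $\langle\theta,[M]\rangle=0$ and $\langle\theta,[M']\rangle<0$ for every nonzero proper submodule $M'\subset M$. *)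

theory Defs
  imports Complex_Main "HOL-Computational_Algebra.Polynomial"
begin

definition fd_algebra :: "('k::field \<Rightarrow> 'a::ring_1 \<Rightarrow> 'a) \<Rightarrow> bool" where
  "fd_algebra sc \<longleftrightarrow> vector_space sc
     \<and> (\<forall>c x y. sc c (x * y) = sc c x * y \<and> sc c (x * y) = x * sc c y)
     \<and> (\<exists>B. finite B \<and> module.span sc B = UNIV)"

definition alg_hom ::
  "('k::field \<Rightarrow> 'a::ring_1 \<Rightarrow> 'a) \<Rightarrow> ('k \<Rightarrow> 'b::ring_1 \<Rightarrow> 'b) \<Rightarrow> ('a \<Rightarrow> 'b) \<Rightarrow> bool" where
  "alg_hom sc sc' f \<longleftrightarrow> f 1 = 1 \<and> (\<forall>x y. f (x * y) = f x * f y)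
     \<and> (\<forall>x y. f (x + y) = f x + f y) \<and> (\<forall>c x. f (sc c x) = sc' c (f x))"

text \<open>Matrices are functions nat => nat => 'k; a matrix is n x m if it vanishes
  outside rows < n and columns < m. Row vectors are functions nat => 'k.\<close>

type_synonym 'k mtx = "nat \<Rightarrow> nat \<Rightarrow> 'k"
type_synonym 'k rvec = "nat \<Rightarrow> 'k"

definition mat_on :: "nat \<Rightarrow> nat \<Rightarrow> 'k::zero mtx \<Rightarrow> bool" where
  "mat_on r c A \<longleftrightarrow> (\<forall>i j. (r \<le> i \<or> c \<le> j) \<longrightarrow> A i j = 0)"

definition vec_on :: "nat \<Rightarrow> 'k::zero rvec \<Rightarrow> bool" where
  "vec_on n v \<longleftrightarrow> (\<forall>i. n \<le> i \<longrightarrow> v i = 0)"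

definition mmul :: "nat \<Rightarrow> 'k::comm_ring_1 mtx \<Rightarrow> 'k mtx \<Rightarrow> 'k mtx" where
  "mmul n A B = (\<lambda>i j. \<Sum>l<n. A i l * B l j)"

definition idm :: "nat \<Rightarrow> 'k::comm_ring_1 mtx" where
  "idm n = (\<lambda>i j. if i = j \<and> i < n then 1 else 0)"

definition vmul :: "nat \<Rightarrow> 'k::comm_ring_1 rvec \<Rightarrow> 'k mtx \<Rightarrow> 'k rvec" where
  "vmul n v A = (\<lambda>j. \<Sum>i<n. v i * A i j)"

definition lin_ind :: "'k::field mtx list \<Rightarrow> bool" where
  "lin_ind xs \<longleftrightarrow> (\<forall>c. (\<lambda>i j. \<Sum>l<length xs. c l * (xs ! l) i j) = (\<lambda>i j. 0)
                        \<longrightarrow> (\<forall>l<length xs. c l = 0))"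

definition mdim :: "'k::field mtx set \<Rightarrow> nat" where
  "mdim S = (GREATEST k. \<exists>xs. length xs = k \<and> set xs \<subseteq> S \<and> lin_ind xs)"

text \<open>A finite-dimensional right module over (the algebra on) 'a is K^n (row vectors)
  with v . a = v * rho a, where rho : 'a => n x n matrices is a unital K-algebra
  homomorphism (right action: rho (a * b) = rho a * rho b).\<close>

type_synonym ('a, 'k) rmod = "nat \<times> ('a \<Rightarrow> 'k mtx)"

definition is_rmod :: "('k::field \<Rightarrow> 'a::ring_1 \<Rightarrow> 'a) \<Rightarrow> ('a, 'k) rmod \<Rightarrow> bool" where
  "is_rmod sc M \<longleftrightarrow> (case M of (n, \<rho>) \<Rightarrow>
      (\<forall>a. mat_on n n (\<rho> a)) \<and> \<rho> 1 = idm n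
    \<and> (\<forall>a b. \<rho> (a * b) = mmul n (\<rho> a) (\<rho> b))
    \<and> (\<forall>a b. \<rho> (a + b) = (\<lambda>i j. \<rho> a i j + \<rho> b i j))
    \<and> (\<forall>c a. \<rho> (sc c a) = (\<lambda>i j. c * \<rho> a i j)))"

text \<open>Module homomorphisms M -> N: matrices X (v |-> v * X) commuting with the action.\<close>

definition hom :: "('a, 'k::field) rmod \<Rightarrow> ('a, 'k) rmod \<Rightarrow> 'k mtx set" where
  "hom M N = (case M of (m, \<rho>) \<Rightarrow> case N of (n, \<sigma>) \<Rightarrow>
     {X. mat_on m n X \<and> (\<forall>a. mmul m (\<rho> a) X = mmul n X (\<sigma> a))})"

definition iso_mod :: "('a, 'k::field) rmod \<Rightarrow> ('a, 'k) rmod \<Rightarrow> bool" where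
  "iso_mod M N \<longleftrightarrow> (\<exists>X\<in>hom M N. \<exists>Y\<in>hom N M.
      mmul (fst N) X Y = idm (fst M) \<and> mmul (fst M) Y X = idm (fst N))"

definition submod :: "('a, 'k::field) rmod \<Rightarrow> 'k rvec set \<Rightarrow> bool" where
  "submod M U \<longleftrightarrow> (case M of (n, \<rho>) \<Rightarrow>
      (\<forall>v\<in>U. vec_on n v) \<and> (\<lambda>i. 0) \<in> U
    \<and> (\<forall>v\<in>U. \<forall>w\<in>U. (\<lambda>i. v i + w i) \<in> U)
    \<and> (\<forall>c. \<forall>v\<in>U. (\<lambda>i. c * v i) \<in> U)
    \<and> (\<forall>a. \<forall>v\<in>U. vmul n v (\<rho> a) \<in> U))"

definition hom_into :: "('a, 'k::field) rmod \<Rightarrow> ('a, 'k) rmod \<Rightarrow> 'k rvec set \<Rightarrow> 'k mtx set" where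
  "hom_into P M U = {X \<in> hom P M. \<forall>v. vec_on (fst P) v \<longrightarrow> vmul (fst P) v X \<in> U}"

definition surj_hom :: "('a, 'k::field) rmod \<Rightarrow> ('a, 'k) rmod \<Rightarrow> 'k mtx \<Rightarrow> bool" where
  "surj_hom M N g \<longleftrightarrow> g \<in> hom M N \<and>
     (\<forall>w. vec_on (fst N) w \<longrightarrow> (\<exists>v. vec_on (fst M) v \<and> vmul (fst M) v g = w))"

definition is_proj :: "('k::field \<Rightarrow> 'a::ring_1 \<Rightarrow> 'a) \<Rightarrow> ('a, 'k) rmod \<Rightarrow> bool" where
  "is_proj sc P \<longleftrightarrow> is_rmod sc P \<and>
     (\<forall>M N g f. is_rmod sc M \<longrightarrow> is_rmod sc N \<longrightarrow> surj_hom M N g \<longrightarrow> f \<in> hom P N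
        \<longrightarrow> (\<exists>h\<in>hom P M. mmul (fst M) h g = f))"

text \<open>An element theta of K_0(proj A) is represented as [P] - [Q] for projectives P, Q
  (every element has this form). The canonical pairing
  <theta, [M]> = dim Hom(P,M) - dim Hom(Q,M).\<close>

definition is_K0proj :: "('k::field \<Rightarrow> 'a::ring_1 \<Rightarrow> 'a) \<Rightarrow> ('a, 'k) rmod \<times> ('a, 'k) rmod \<Rightarrow> bool" where
  "is_K0proj sc \<theta> \<longleftrightarrow> is_proj sc (fst \<theta>) \<and> is_proj sc (snd \<theta>)"

definition pairing :: "('a, 'k::field) rmod \<times> ('a, 'k) rmod \<Rightarrow> ('a, 'k) rmod \<Rightarrow> int" where
  "pairing \<theta> M = int (mdim (hom (fst \<theta>) M)) - int (mdim (hom (snd \<theta>) M))"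

definition pairing_sub :: "('a, 'k::field) rmod \<times> ('a, 'k) rmod \<Rightarrow> ('a, 'k) rmod \<Rightarrow> 'k rvec set \<Rightarrow> int" where
  "pairing_sub \<theta> M U = int (mdim (hom_into (fst \<theta>) M U)) - int (mdim (hom_into (snd \<theta>) M U))"

text \<open>Dimension vector [M] in K_0(mod A), encoded by its (perfect) pairing with
  K_0(proj A): [M] is determined by P |-> dim Hom(P, M) for projective P.\<close>

definition dimvec :: "('k::field \<Rightarrow> 'a::ring_1 \<Rightarrow> 'a) \<Rightarrow> ('a, 'k) rmod \<Rightarrow> (('a, 'k) rmod \<Rightarrow> nat)" where
  "dimvec sc M = (\<lambda>P. if is_proj sc P then mdim (hom P M) else 0)"

definition theta_stable ::
  "('k::field \<Rightarrow> 'a::ring_1 \<Rightarrow> 'a) \<Rightarrow> ('a, 'k) rmod \<times> ('a, 'k) rmod \<Rightarrow> ('a, 'k) rmod \<Rightarrow> bool" where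
  "theta_stable sc \<theta> M \<longleftrightarrow> is_rmod sc M \<and> pairing \<theta> M = 0 \<and>
     (\<forall>U. submod M U \<longrightarrow> U \<noteq> {\<lambda>i. 0} \<longrightarrow> U \<noteq> {v. vec_on (fst M) v}
        \<longrightarrow> pairing_sub \<theta> M U < 0)"

definition stable_classes ::
  "('k::field \<Rightarrow> 'a::ring_1 \<Rightarrow> 'a) \<Rightarrow> ('a, 'k) rmod \<times> ('a, 'k) rmod \<Rightarrow> (('a, 'k) rmod \<Rightarrow> nat)
     \<Rightarrow> ('a, 'k) rmod set set" where
  "stable_classes sc \<theta> d =
     (\<lambda>M. {N. is_rmod sc N \<and> iso_mod M N}) ` {M. theta_stable sc \<theta> M \<and> dimvec sc M = d}"

end

theory Submission
  imports Defs "HOL-Library.Function_Algebras"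
begin

text \<open>
  Restriction of scalars along the surjection \<open>f : \<Lambda> \<rightarrow> \<Lambda>'\<close> identifies \<open>\<Lambda>'\<close>-modules with the
  \<open>\<Lambda>\<close>-modules annihilated by the kernel, with the same submodules and the same homomorphisms.
  Every projective \<open>\<Lambda>'\<close>-module \<open>P' = \<epsilon>\<Lambda>'\<^sup>p\<close> lifts to a projective \<open>\<Lambda>\<close>-module \<open>P = E\<Lambda>\<^sup>p\<close>: lift
  the idempotent \<open>\<epsilon>\<close> to some endomorphism \<open>A\<close> of \<open>\<Lambda>\<^sup>p\<close> and replace \<open>A\<close> by a polynomial in \<open>A\<close>
  that is idempotent (lifting of idempotents through the finite-dimensional algebra \<open>K[A]\<close>).
  Then \<open>Hom\<^sub>\<Lambda>(P, M) \<cong> Hom\<^sub>\<Lambda>\<^sub>'(P', M)\<close> for every \<open>\<Lambda>'\<close>-module \<open>M\<close>, also for homomorphisms landing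
  in a given submodule; so lifting \<open>\<theta>' = [P'] - [Q']\<close> to \<open>\<theta> = [P] - [Q]\<close> gives
  \<open>\<langle>\<theta>, M\<rangle> = \<langle>\<theta>', M\<rangle>\<close> on submodules, and \<open>\<theta>'\<close>-stable modules restrict to \<open>\<theta>\<close>-stable ones.
  Dually, every projective \<open>\<Lambda>\<close>-module \<open>R\<close> has a base change \<open>R'\<close> with
  \<open>Hom\<^sub>\<Lambda>(R, M) \<cong> Hom\<^sub>\<Lambda>\<^sub>'(R', M)\<close>, so the dimension vector of a restricted module is determined
  by the original one. Since restriction reflects isomorphism, infinitely many classes of
  \<open>\<theta>'\<close>-stable \<open>\<Lambda>'\<close>-modules of dimension vector \<open>d'\<close> give infinitely many classes of
  \<open>\<theta>\<close>-stable \<open>\<Lambda>\<close>-modules of one dimension vector \<open>d\<close>.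
\<close>

section \<open>Matrices\<close>

lemma mmul_assoc: "mmul n (mmul m A B) C = mmul m A (mmul n B C)"
  unfolding mmul_def
  by (auto simp: sum_distrib_left sum_distrib_right mult.assoc intro!: ext sum.swap)

lemma mmul_row: "mmul n A B t = vmul n (A t) B"
  unfolding mmul_def vmul_def by simp

lemma mat_on_mmul: "mat_on r n A \<Longrightarrow> mat_on n c B \<Longrightarrow> mat_on r c (mmul n A B)"
  unfolding mat_on_def mmul_def by auto

lemma mat_on_idm: "mat_on n n (idm n)"
  unfolding mat_on_def idm_def by auto

lemma mmul_idm_left: "mat_on n c B \<Longrightarrow> mmul n (idm n) B = B"
proof (intro ext)
  fix i j assume B: "mat_on n c B"
  show "mmul n (idm n) B i j = B i j"
  proof (cases "i < n")
    case True
    then show ?thesis unfolding mmul_def idm_def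
      by (simp add: if_distrib[of "\<lambda>x. x * _"] sum.delta cong: if_cong)
  qed (use B in \<open>auto simp: mmul_def idm_def mat_on_def\<close>)
qed

lemma mmul_idm_right: "mat_on r n A \<Longrightarrow> mmul n A (idm n) = A"
proof (intro ext)
  fix i j assume A: "mat_on r n A"
  show "mmul n A (idm n) i j = A i j"
  proof (cases "j < n")
    case True
    then show ?thesis unfolding mmul_def idm_def
      by (simp add: if_distrib[of "\<lambda>x. _ * x"] sum.delta' cong: if_cong)
  qed (use A in \<open>auto simp: mmul_def idm_def mat_on_def\<close>)
qed

lemma vmul_mmul: "vmul m (vmul n v A) B = vmul n v (mmul m A B)"
  unfolding vmul_def mmul_def
  by (auto simp: sum_distrib_left sum_distrib_right mult.assoc intro!: ext sum.swap)

lemma vec_on_vmul: "mat_on r c A \<Longrightarrow> vec_on c (vmul k v A)"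
  unfolding vec_on_def vmul_def mat_on_def by auto

definition uvec :: "nat \<Rightarrow> 'k::zero_neq_one rvec" where
  "uvec i = (\<lambda>j. if j = i then 1 else 0)"

lemma vec_on_uvec: "i < n \<Longrightarrow> vec_on n (uvec i)"
  unfolding vec_on_def uvec_def by auto

lemma vmul_uvec: "i < n \<Longrightarrow> vmul n (uvec i) A = A i"
  unfolding vmul_def uvec_def
  by (auto intro!: ext simp: if_distrib[of "\<lambda>x. x * _"] sum.delta cong: if_cong)

lemma vmul_idm: "vec_on n v \<Longrightarrow> vmul n v (idm n) = v"
  unfolding vmul_def idm_def vec_on_def
  by (auto intro!: ext simp: if_distrib[of "\<lambda>x. _ * x"] sum.delta' cong: if_cong)

definition msc :: "'k::comm_ring_1 \<Rightarrow> 'k mtx \<Rightarrow> 'k mtx" where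
  "msc c A = (\<lambda>i j. c * A i j)"

definition vsc :: "'k::comm_ring_1 \<Rightarrow> 'k rvec \<Rightarrow> 'k rvec" where
  "vsc c v = (\<lambda>i. c * v i)"

lemma vector_space_msc: "vector_space (msc :: 'k::field \<Rightarrow> 'k mtx \<Rightarrow> 'k mtx)"
  by unfold_locales (auto simp: msc_def algebra_simps intro!: ext)

lemma vector_space_vsc: "vector_space (vsc :: 'k::field \<Rightarrow> 'k rvec \<Rightarrow> 'k rvec)"
  by unfold_locales (auto simp: vsc_def algebra_simps intro!: ext)

lemma msc_zero [simp]: "msc 0 A = 0"
  by (auto simp: msc_def intro!: ext)

lemma msc_one [simp]: "msc 1 A = A"
  by (auto simp: msc_def intro!: ext)

lemma msc_add: "msc (a + b) A = msc a A + msc b A"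
  by (auto simp: msc_def algebra_simps intro!: ext)

lemma msc_add_right: "msc a (A + B) = msc a A + msc a B"
  by (auto simp: msc_def algebra_simps intro!: ext)

lemma msc_msc: "msc a (msc b A) = msc (a * b) A"
  by (auto simp: msc_def algebra_simps intro!: ext)

lemma msc_sum_left: "msc (\<Sum>i\<in>I. f i) A = (\<Sum>i\<in>I. msc (f i) A)"
  by (induction I rule: infinite_finite_induct) (auto simp: msc_add)

lemma msc_sum_right: "msc a (\<Sum>i\<in>I. f i) = (\<Sum>i\<in>I. msc a (f i))"
proof (induction I rule: infinite_finite_induct)
  case (insert x F)
  then show ?case by (simp only: sum.insert[OF insert(1,2)] msc_add_right)
qed (auto simp: msc_def zero_fun_def)

lemma sum_fun_apply: "(sum f A) x = sum (\<lambda>a. f a x) A"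
  by (induction A rule: infinite_finite_induct) auto

lemma mmul_zero_left [simp]: "mmul n 0 B = 0"
  unfolding mmul_def by (auto intro!: ext)

lemma mmul_zero_right [simp]: "mmul n A 0 = 0"
  unfolding mmul_def by (auto intro!: ext)

lemma mmul_zero_fun_left [simp]: "mmul n (\<lambda>i j. 0) B = (\<lambda>i j. 0)"
  unfolding mmul_def by (auto intro!: ext)

lemma mmul_zero_fun_right [simp]: "mmul n A (\<lambda>i j. 0) = (\<lambda>i j. 0)"
  unfolding mmul_def by (auto intro!: ext)

lemma mmul_add_left: "mmul n (A + B) C = mmul n A C + mmul n B C"
  unfolding mmul_def by (auto intro!: ext simp: distrib_right sum.distrib)

lemma mmul_add_right: "mmul n A (B + C) = mmul n A B + mmul n A C"
  unfolding mmul_def by (auto intro!: ext simp: distrib_left sum.distrib)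

lemma mmul_msc_left: "mmul n (msc c A) B = msc c (mmul n A B)"
  unfolding mmul_def msc_def by (auto intro!: ext simp: sum_distrib_left mult.assoc)

lemma mmul_msc_right: "mmul n A (msc c B) = msc c (mmul n A B)"
  unfolding mmul_def msc_def by (auto intro!: ext simp: sum_distrib_left mult.assoc mult.left_commute)

lemma mmul_sum_left: "mmul n (\<Sum>i\<in>I. X i) B = (\<Sum>i\<in>I. mmul n (X i) B)"
proof (induction I rule: infinite_finite_induct)
  case (insert x F)
  then show ?case by (simp only: sum.insert[OF insert(1,2)] mmul_add_left)
qed auto

lemma mmul_sum_right: "mmul n A (\<Sum>i\<in>I. X i) = (\<Sum>i\<in>I. mmul n A (X i))"
proof (induction I rule: infinite_finite_induct)
  case (insert x F)
  then show ?case by (simp only: sum.insert[OF insert(1,2)] mmul_add_right)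
qed auto

lemma mat_on_zero [simp]: "mat_on r c 0"
  unfolding mat_on_def by auto

lemma mat_on_add: "mat_on r c (A::'k::comm_ring_1 mtx) \<Longrightarrow> mat_on r c B \<Longrightarrow> mat_on r c (A + B)"
  unfolding mat_on_def by auto

lemma mat_on_msc: "mat_on r c A \<Longrightarrow> mat_on r c (msc x A)"
  unfolding mat_on_def msc_def by auto

lemma mat_on_sum: "(\<And>i. i \<in> I \<Longrightarrow> mat_on r c (X i :: 'k::comm_ring_1 mtx)) \<Longrightarrow> mat_on r c (\<Sum>i\<in>I. X i)"
  by (induction I rule: infinite_finite_induct) (auto simp: mat_on_add)

lemma vmul_zero_left [simp]: "vmul n (\<lambda>i. 0) A = (\<lambda>j. 0)"
  unfolding vmul_def by auto

lemma vmul_add_left: "vmul n (v + w) A = vmul n v A + vmul n w A"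
  unfolding vmul_def by (auto intro!: ext simp: distrib_right sum.distrib)

lemma vmul_add_right: "vmul n v (A + B) = vmul n v A + vmul n v B"
  unfolding vmul_def by (auto intro!: ext simp: distrib_left sum.distrib)

lemma vmul_scale_left: "vmul n (\<lambda>i. c * v i) A = (\<lambda>j. c * vmul n v A j)"
  unfolding vmul_def by (auto intro!: ext simp: sum_distrib_left mult.assoc)

lemma vmul_msc_right: "vmul n v (msc c X) = (\<lambda>j. c * vmul n v X j)"
  unfolding vmul_def msc_def by (auto intro!: ext simp: sum_distrib_left mult.left_commute)

lemma vmul_sum_right: "vmul n v (\<Sum>l\<in>I. X l) = (\<Sum>l\<in>I. vmul n v (X l))"
proof (induction I rule: infinite_finite_induct)
  case (insert y F)
  then show ?case by (simp only: sum.insert[OF insert(1,2)] vmul_add_right)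
qed (auto simp: vmul_def zero_fun_def)

lemma vmul_as_sum: "vmul m w E = (\<Sum>t<m. vsc (w t) (E t))"
  unfolding vmul_def by (auto intro!: ext simp: sum_fun_apply vsc_def)

section \<open>Linear independence and the dimension \<open>mdim\<close>\<close>

lemma lincomb_eq_sum: "(\<lambda>i j. \<Sum>l<n. c l * (xs ! l) i j) = (\<Sum>l<n. msc (c l) (xs ! l))"
  by (auto intro!: ext simp: sum_fun_apply msc_def)

lemma mmul_lincomb:
  "mmul k B (\<lambda>i j. \<Sum>l<n. c l * (Y l) i j) = (\<lambda>i j. \<Sum>l<n. c l * (mmul k B (Y l)) i j)"
  unfolding mmul_def
  by (auto intro!: ext simp: sum_distrib_left mult.left_commute intro: sum.swap)

lemma lin_ind_distinct:
  fixes xs :: "'k::field mtx list"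
  assumes "lin_ind xs" shows "distinct xs"
proof (rule ccontr)
  assume "\<not> distinct xs"
  then obtain a b where ab: "a < length xs" "b < length xs" "a \<noteq> b" "xs ! a = xs ! b"
    using distinct_conv_nth by blast
  define c where "c l = (if l = a then 1 else if l = b then -1 else (0::'k))" for l
  have "(\<lambda>i j. \<Sum>l<length xs. c l * (xs ! l) i j) = (\<lambda>i j. 0)"
  proof (intro ext)
    fix i j
    have "(\<Sum>l<length xs. c l * (xs ! l) i j) = (\<Sum>l\<in>{a,b}. c l * (xs ! l) i j)"
      by (rule sum.mono_neutral_right) (use ab in \<open>auto simp: c_def\<close>)
    also have "\<dots> = 0" using ab by (simp add: c_def)
    finally show "(\<Sum>l<length xs. c l * (xs ! l) i j) = 0" .
  qed
  with assms have "c a = 0" using ab unfolding lin_ind_def by blast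
  then show False by (simp add: c_def)
qed

lemma lin_ind_independent:
  fixes xs :: "'k::field mtx list"
  assumes "lin_ind xs" shows "\<not> module.dependent msc (set xs)"
proof -
  interpret V: vector_space "msc :: 'k \<Rightarrow> 'k mtx \<Rightarrow> 'k mtx" by (rule vector_space_msc)
  have dist: "distinct xs" using assms by (rule lin_ind_distinct)
  show ?thesis
    unfolding V.independent_explicit_module
  proof (intro allI impI)
    fix t u v assume t: "finite t" "t \<subseteq> set xs" "(\<Sum>v\<in>t. msc (u v) v) = 0" "v \<in> t"
    define c where "c l = (if xs ! l \<in> t then u (xs ! l) else 0)" for l
    have inj: "inj_on (nth xs) {..<length xs}" using dist by (simp add: inj_on_nth)
    have img: "nth xs ` {..<length xs} = set xs" by (auto simp: set_conv_nth)
    have "(\<Sum>l<length xs. msc (c l) (xs ! l)) = (\<Sum>w\<in>set xs. msc (if w \<in> t then u w else 0) w)"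
      unfolding img[symmetric] by (subst sum.reindex[OF inj]) (simp add: c_def)
    also have "\<dots> = (\<Sum>w\<in>t. msc (u w) w)"
      by (rule sum.mono_neutral_cong_right) (use t in \<open>auto simp: msc_def intro!: ext\<close>)
    finally have "(\<lambda>i j. \<Sum>l<length xs. c l * (xs ! l) i j) = (\<lambda>i j. 0)"
      using t(3) by (simp add: lincomb_eq_sum zero_fun_def)
    then have "\<forall>l<length xs. c l = 0" using assms unfolding lin_ind_def by blast
    moreover obtain l where "l < length xs" "xs ! l = v" using t by (auto simp: set_conv_nth)
    ultimately show "u v = 0" using t by (auto simp: c_def)
  qed
qed

definition mat_unit :: "nat \<Rightarrow> nat \<Rightarrow> 'k::zero_neq_one mtx" where
  "mat_unit i j = (\<lambda>a b. if a = i \<and> b = j then 1 else 0)"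

lemma mat_on_in_span_mat_units:
  fixes X :: "'k::field mtx"
  assumes "mat_on r c X"
  shows "X \<in> module.span msc ((\<lambda>(i, j). mat_unit i j) ` ({..<r} \<times> {..<c}))"
proof -
  interpret V: vector_space "msc :: 'k \<Rightarrow> 'k mtx \<Rightarrow> 'k mtx" by (rule vector_space_msc)
  have "X = (\<Sum>(i, j)\<in>{..<r} \<times> {..<c}. msc (X i j) (mat_unit i j))"
  proof (intro ext)
    fix a b
    have "(\<Sum>(i, j)\<in>{..<r} \<times> {..<c}. msc (X i j) (mat_unit i j)) a b
        = (\<Sum>p\<in>{..<r} \<times> {..<c}. if p = (a, b) then X a b else 0)"
      unfolding sum_fun_apply by (rule sum.cong) (auto simp: msc_def mat_unit_def split: if_splits)
    also have "\<dots> = X a b"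
      using assms by (auto simp: sum.delta' mat_on_def)
    finally show "X a b = (\<Sum>(i, j)\<in>{..<r} \<times> {..<c}. msc (X i j) (mat_unit i j)) a b" ..
  qed
  also have "\<dots> \<in> V.span ((\<lambda>(i, j). mat_unit i j) ` ({..<r} \<times> {..<c}))"
    by (intro V.span_sum) (auto intro: V.span_scale V.span_base)
  finally show ?thesis .
qed

lemma lin_ind_length_le:
  fixes xs :: "'k::field mtx list"
  assumes "lin_ind xs" "\<forall>X\<in>set xs. mat_on r c X"
  shows "length xs \<le> r * c"
proof -
  interpret V: vector_space "msc :: 'k \<Rightarrow> 'k mtx \<Rightarrow> 'k mtx" by (rule vector_space_msc)
  let ?U = "(\<lambda>(i, j). mat_unit i j :: 'k mtx) ` ({..<r} \<times> {..<c})"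
  have "length xs = card (set xs)"
    using lin_ind_distinct[OF assms(1)] by (simp add: distinct_card)
  also have "\<dots> \<le> card ?U"
  proof -
    have "set xs \<subseteq> V.span ?U"
      using assms(2) mat_on_in_span_mat_units by blast
    then show ?thesis
      using V.independent_span_bound[OF _ lin_ind_independent[OF assms(1)]] by simp
  qed
  also have "\<dots> \<le> r * c"
    using card_image_le[of "{..<r} \<times> {..<c}"] by (simp add: card_cartesian_product)
  finally show ?thesis .
qed

definition bounded_mats :: "'k::zero mtx set \<Rightarrow> bool" where
  "bounded_mats S \<longleftrightarrow> (\<exists>r c. \<forall>X\<in>S. mat_on r c X)"

lemma bounded_mats_subset: "bounded_mats T \<Longrightarrow> S \<subseteq> T \<Longrightarrow> bounded_mats S"
  unfolding bounded_mats_def by blast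

lemma lin_ind_length_bounded:
  fixes S :: "'k::field mtx set"
  assumes "bounded_mats S"
  shows "\<exists>b. \<forall>xs. lin_ind xs \<and> set xs \<subseteq> S \<longrightarrow> length xs \<le> b"
  using assms lin_ind_length_le unfolding bounded_mats_def by (metis subsetD)

lemma mdim_attained:
  fixes S :: "'k::field mtx set"
  assumes "bounded_mats S"
  obtains xs where "length xs = mdim S" "set xs \<subseteq> S" "lin_ind xs"
proof -
  obtain b where b: "\<And>xs. lin_ind xs \<Longrightarrow> set xs \<subseteq> S \<Longrightarrow> length xs \<le> b"
    using lin_ind_length_bounded[OF assms] by blast
  have "lin_ind ([] :: 'k mtx list)" by (simp add: lin_ind_def)
  then show ?thesis
    using that GreatestI_nat[of "\<lambda>k. \<exists>xs. length xs = k \<and> set xs \<subseteq> S \<and> lin_ind xs" 0 b] b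
    unfolding mdim_def by fastforce
qed

lemma length_le_mdim:
  fixes S :: "'k::field mtx set"
  assumes "bounded_mats S" "lin_ind xs" "set xs \<subseteq> S"
  shows "length xs \<le> mdim S"
proof -
  obtain b where b: "\<And>xs. lin_ind xs \<Longrightarrow> set xs \<subseteq> S \<Longrightarrow> length xs \<le> b"
    using lin_ind_length_bounded[OF assms(1)] by blast
  show ?thesis
    using assms(2,3) Greatest_le_nat[of "\<lambda>k. \<exists>xs. length xs = k \<and> set xs \<subseteq> S \<and> lin_ind xs"
        "length xs" b] b unfolding mdim_def by blast
qed

lemma lin_ind_map_mmul:
  fixes xs :: "'k::field mtx list"
  assumes "lin_ind xs" and inv: "\<And>X. X \<in> set xs \<Longrightarrow> mmul k' B (mmul k A X) = X"
  shows "lin_ind (map (mmul k A) xs)"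
  unfolding lin_ind_def
proof (rule allI, rule impI)
  fix c
  assume zero: "(\<lambda>i j. \<Sum>l<length (map (mmul k A) xs). c l * (map (mmul k A) xs ! l) i j) = (\<lambda>i j. 0)"
  have "(\<lambda>i j. \<Sum>l<length xs. c l * (xs ! l) i j)
      = (\<lambda>i j. \<Sum>l<length xs. c l * (mmul k' B (mmul k A (xs ! l))) i j)"
    using inv by (intro ext sum.cong) auto
  also have "\<dots> = mmul k' B (\<lambda>i j. \<Sum>l<length xs. c l * (mmul k A (xs ! l)) i j)"
    by (simp only: mmul_lincomb)
  also have "\<dots> = (\<lambda>i j. 0)"
    using zero by simp
  finally show "\<forall>l<length (map (mmul k A) xs). c l = 0"
    using assms(1) unfolding lin_ind_def by simp
qed

lemma mdim_le_of_left_inverse: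
  fixes S T :: "'k::field mtx set"
  assumes "bounded_mats S" "bounded_mats T"
    and "\<And>X. X \<in> S \<Longrightarrow> mmul k A X \<in> T"
    and "\<And>X. X \<in> S \<Longrightarrow> mmul k' B (mmul k A X) = X"
  shows "mdim S \<le> mdim T"
proof -
  obtain xs where xs: "length xs = mdim S" "set xs \<subseteq> S" "lin_ind xs"
    using mdim_attained[OF assms(1)] .
  have "lin_ind (map (mmul k A) xs)"
    using xs(2,3) assms(4) by (intro lin_ind_map_mmul) auto
  moreover have "set (map (mmul k A) xs) \<subseteq> T"
    using xs(2) assms(3) by auto
  ultimately show ?thesis
    using length_le_mdim[OF assms(2)] xs(1) by fastforce
qed

lemma mdim_eq_of_inverse:
  fixes S T :: "'k::field mtx set"
  assumes "bounded_mats S" "bounded_mats T"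
    and "\<And>X. X \<in> S \<Longrightarrow> mmul k A X \<in> T"
    and "\<And>X. X \<in> S \<Longrightarrow> mmul k' B (mmul k A X) = X"
    and "\<And>Y. Y \<in> T \<Longrightarrow> mmul k' B Y \<in> S"
    and "\<And>Y. Y \<in> T \<Longrightarrow> mmul k A (mmul k' B Y) = Y"
  shows "mdim S = mdim T"
  using mdim_le_of_left_inverse[of S T k A k' B] mdim_le_of_left_inverse[of T S k' B k A] assms
  by (meson le_antisym)

section \<open>Modules, homomorphisms and retracts\<close>

lemma hom_mat_on: "X \<in> hom (m, \<rho>) (n, \<sigma>) \<Longrightarrow> mat_on m n X"
  unfolding hom_def by auto

lemma hom_eq: "mmul m (\<rho> a) X = mmul n X (\<sigma> a)" if "X \<in> hom (m, \<rho>) (n, \<sigma>)"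
  using that unfolding hom_def by auto

lemma homI: "mat_on m n X \<Longrightarrow> (\<And>a. mmul m (\<rho> a) X = mmul n X (\<sigma> a)) \<Longrightarrow> X \<in> hom (m, \<rho>) (n, \<sigma>)"
  unfolding hom_def by auto

lemma bounded_mats_hom: "bounded_mats (hom (m, \<rho>) (n, \<sigma>))"
  unfolding bounded_mats_def hom_def by auto

lemma hom_comp:
  assumes "X \<in> hom (m, \<rho>) (n, \<sigma>)" "Y \<in> hom (n, \<sigma>) (p, \<tau>)"
  shows "mmul n X Y \<in> hom (m, \<rho>) (p, \<tau>)"
proof (rule homI)
  show "mat_on m p (mmul n X Y)" using assms by (auto intro: mat_on_mmul hom_mat_on)
  fix a
  have "mmul m (\<rho> a) (mmul n X Y) = mmul n (mmul m (\<rho> a) X) Y" by (simp add: mmul_assoc)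
  also have "\<dots> = mmul n (mmul n X (\<sigma> a)) Y" using hom_eq[OF assms(1)] by simp
  also have "\<dots> = mmul n X (mmul n (\<sigma> a) Y)" by (simp add: mmul_assoc)
  also have "\<dots> = mmul n X (mmul p Y (\<tau> a))" using hom_eq[OF assms(2)] by simp
  also have "\<dots> = mmul p (mmul n X Y) (\<tau> a)" by (simp add: mmul_assoc)
  finally show "mmul m (\<rho> a) (mmul n X Y) = mmul p (mmul n X Y) (\<tau> a)" .
qed

lemma rmodD:
  assumes "is_rmod sc (n, \<rho>)"
  shows "mat_on n n (\<rho> a)" "\<rho> 1 = idm n" "\<rho> (a * b) = mmul n (\<rho> a) (\<rho> b)"
    "\<rho> (a + b) = \<rho> a + \<rho> b" "\<rho> (sc c a) = msc c (\<rho> a)"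
  using assms unfolding is_rmod_def by (auto simp: msc_def plus_fun_def)

lemma idm_hom: assumes "is_rmod sc (n, \<rho>)" shows "idm n \<in> hom (n, \<rho>) (n, \<rho>)"
proof (rule homI)
  show "mat_on n n (idm n)" by (rule mat_on_idm)
  fix a have "mat_on n n (\<rho> a)" using rmodD(1)[OF assms] .
  then show "mmul n (\<rho> a) (idm n) = mmul n (idm n) (\<rho> a)" by (simp add: mmul_idm_left mmul_idm_right)
qed

lemma hom_add: "X \<in> hom (m, \<rho>) (n, \<sigma>) \<Longrightarrow> Y \<in> hom (m, \<rho>) (n, \<sigma>) \<Longrightarrow> X + Y \<in> hom (m, \<rho>) (n, \<sigma>)"
  unfolding hom_def by (auto simp: mat_on_add mmul_add_left mmul_add_right)

lemma hom_msc: "X \<in> hom (m, \<rho>) (n, \<sigma>) \<Longrightarrow> msc c X \<in> hom (m, \<rho>) (n, \<sigma>)"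
  unfolding hom_def by (auto simp: mat_on_msc mmul_msc_left mmul_msc_right)

lemma hom_zero: "(0::'k::field mtx) \<in> hom (m, \<rho>) (n, \<sigma>)"
  unfolding hom_def by auto

lemma rmod_zero:
  assumes "vector_space sc" "is_rmod sc (n, \<rho>)" shows "\<rho> 0 = 0"
proof -
  interpret V: vector_space sc by (rule assms(1))
  have "\<rho> (sc 0 0) = msc 0 (\<rho> 0)" by (rule rmodD(5)[OF assms(2)])
  moreover have "sc 0 0 = 0" by simp
  ultimately show ?thesis by simp
qed

lemma rmod_sum:
  assumes "vector_space sc" "is_rmod sc (n, \<rho>)" shows "\<rho> (\<Sum>l\<in>I. x l) = (\<Sum>l\<in>I. \<rho> (x l))"
proof (induction I rule: infinite_finite_induct)
  case (insert y F)
  then show ?case by (simp only: sum.insert[OF insert(1,2)] rmodD(4)[OF assms(2)])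
qed (auto simp: rmod_zero[OF assms])

lemma retraction_idempotent:
  assumes "mat_on p n s" "mmul n s g = idm p"
  shows "mmul n (mmul p g s) (mmul p g s) = mmul p g s"
proof -
  have "mmul n (mmul p g s) (mmul p g s) = mmul p g (mmul p (mmul n s g) s)"
    by (simp add: mmul_assoc)
  also have "\<dots> = mmul p g s"
    using assms by (simp add: mmul_idm_left)
  finally show ?thesis .
qed

lemma hom_into_UNIV: "hom_into X Z UNIV = hom X Z"
  by (simp add: hom_into_def)

text \<open>\<open>hom_fixed X Z E U\<close> is \<open>Hom(E X, U)\<close> for an idempotent endomorphism \<open>E\<close> of \<open>X\<close>, realised
  inside \<open>Hom(X, Z)\<close>.\<close>

definition hom_fixed :: "('a, 'k::field) rmod \<Rightarrow> ('a, 'k) rmod \<Rightarrow> 'k mtx \<Rightarrow> 'k rvec set \<Rightarrow> 'k mtx set" where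
  "hom_fixed X Z E U = {\<phi> \<in> hom X Z. mmul (fst X) E \<phi> = \<phi> \<and> (\<forall>v. vec_on (fst X) v \<longrightarrow> vmul (fst X) v \<phi> \<in> U)}"

lemma mdim_hom_into_retract:
  fixes g s :: "'k::field mtx"
  assumes g: "g \<in> hom (ny, \<rho>y) (nx, \<rho>x)" and s: "s \<in> hom (nx, \<rho>x) (ny, \<rho>y)"
    and sg: "mmul ny s g = idm nx"
  shows "mdim (hom_into (nx, \<rho>x) (nz, \<rho>z) U) = mdim (hom_fixed (ny, \<rho>y) (nz, \<rho>z) (mmul nx g s) U)"
proof (rule mdim_eq_of_inverse[where k=nx and A=g and k'=ny and B=s])
  show "bounded_mats (hom_into (nx, \<rho>x) (nz, \<rho>z) U)"
    by (rule bounded_mats_subset[OF bounded_mats_hom]) (auto simp: hom_into_def)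
  show "bounded_mats (hom_fixed (ny, \<rho>y) (nz, \<rho>z) (mmul nx g s) U)"
    by (rule bounded_mats_subset[OF bounded_mats_hom]) (auto simp: hom_fixed_def)
  have gm: "mat_on ny nx g" using g by (rule hom_mat_on)
  have sm: "mat_on nx ny s" using s by (rule hom_mat_on)
  show cancel: "mmul ny s (mmul nx g X) = X" if "X \<in> hom_into (nx, \<rho>x) (nz, \<rho>z) U" for X
  proof -
    have "mat_on nx nz X" using that by (auto simp: hom_into_def intro: hom_mat_on)
    then show ?thesis by (simp add: mmul_assoc[symmetric] sg mmul_idm_left)
  qed
  show "mmul nx g X \<in> hom_fixed (ny, \<rho>y) (nz, \<rho>z) (mmul nx g s) U" if X: "X \<in> hom_into (nx, \<rho>x) (nz, \<rho>z) U" for X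
  proof -
    have h: "X \<in> hom (nx, \<rho>x) (nz, \<rho>z)" using X by (simp add: hom_into_def)
    have "mmul ny (mmul nx g s) (mmul nx g X) = mmul nx g X"
      using cancel[OF X] by (simp add: mmul_assoc)
    moreover have "vmul ny v (mmul nx g X) \<in> U" if "vec_on ny v" for v
      using X vec_on_vmul[OF gm] by (auto simp: hom_into_def vmul_mmul[symmetric])
    ultimately show ?thesis using hom_comp[OF g h] by (auto simp: hom_fixed_def)
  qed
  show "mmul nx g (mmul ny s Y) = Y" if "Y \<in> hom_fixed (ny, \<rho>y) (nz, \<rho>z) (mmul nx g s) U" for Y
    using that by (simp add: hom_fixed_def mmul_assoc)
  show "mmul ny s Y \<in> hom_into (nx, \<rho>x) (nz, \<rho>z) U" if Y: "Y \<in> hom_fixed (ny, \<rho>y) (nz, \<rho>z) (mmul nx g s) U" for Y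
  proof -
    have h: "Y \<in> hom (ny, \<rho>y) (nz, \<rho>z)" using Y by (simp add: hom_fixed_def)
    have "vmul nx v (mmul ny s Y) \<in> U" if "vec_on nx v" for v
      using Y vec_on_vmul[OF sm] by (auto simp: hom_fixed_def vmul_mmul[symmetric])
    then show ?thesis using hom_comp[OF s h] by (auto simp: hom_into_def)
  qed
qed

text \<open>For an idempotent endomorphism \<open>E = C B\<close> of \<open>F\<close> with \<open>B C = 1\<^sub>r\<close>, the summand \<open>E F\<close>
  is realised on \<open>K\<^sup>r\<close> as \<open>retract_mod r B C F\<close>.\<close>

definition retract_mod :: "nat \<Rightarrow> 'k::comm_ring_1 mtx \<Rightarrow> 'k mtx \<Rightarrow> ('a, 'k) rmod \<Rightarrow> ('a, 'k) rmod" where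
  "retract_mod r B C F = (r, \<lambda>a. mmul (fst F) B (mmul (fst F) (snd F a) C))"

lemma retract_mod_pair [simp]: "retract_mod r B C (m, \<rho>) = (r, \<lambda>a. mmul m B (mmul m (\<rho> a) C))"
  by (simp add: retract_mod_def)

context
  fixes sc :: "'k::field \<Rightarrow> 'a::ring_1 \<Rightarrow> 'a" and m r :: nat and \<rho> :: "'a \<Rightarrow> 'k mtx"
    and B C E :: "'k mtx"
  assumes F: "is_rmod sc (m, \<rho>)" and E: "E \<in> hom (m, \<rho>) (m, \<rho>)"
    and Bm: "mat_on r m B" and Cm: "mat_on m r C"
    and BC: "mmul m B C = idm r" and CB: "mmul r C B = E"
begin

private lemma act_mat_on: "mat_on m m (\<rho> a)" using rmodD(1)[OF F] .

private lemma BE: "mmul m B E = B"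
proof -
  have "mmul m B E = mmul r (mmul m B C) B" using CB by (simp add: mmul_assoc)
  also have "\<dots> = B" using BC Bm by (simp add: mmul_idm_left)
  finally show ?thesis .
qed

private lemma EC: "mmul m E C = C"
proof -
  have "mmul m E C = mmul r C (mmul m B C)" by (simp add: mmul_assoc CB[symmetric])
  also have "\<dots> = C" using BC Cm by (simp add: mmul_idm_right)
  finally show ?thesis .
qed

private lemma CB_mmul: "mmul r C (mmul m B W) = mmul m E W"
  using CB by (simp add: mmul_assoc[symmetric])

private lemma act_comm_E: "mmul m (\<rho> a) E = mmul m E (\<rho> a)"
  using hom_eq[OF E] .

lemma retract_mod_rmod: "is_rmod sc (retract_mod r B C (m, \<rho>))"
proof -
  let ?P = "\<lambda>a. mmul m B (mmul m (\<rho> a) C)"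
  have "mat_on r r (?P a)" for a using Bm Cm act_mat_on by (intro mat_on_mmul) auto
  moreover have "?P 1 = idm r"
    using rmodD(2)[OF F] Cm BC by (simp add: mmul_idm_left)
  moreover have "?P (a * b) = mmul r (?P a) (?P b)" for a b
  proof -
    have "mmul r (?P a) (?P b) = mmul m B (mmul m (\<rho> a) (mmul r C (mmul m B (mmul m (\<rho> b) C))))"
      by (simp add: mmul_assoc)
    also have "\<dots> = mmul m B (mmul m (\<rho> a) (mmul m E (mmul m (\<rho> b) C)))"
      by (simp add: CB_mmul)
    also have "\<dots> = mmul m (mmul m B E) (mmul m (\<rho> a) (mmul m (\<rho> b) C))"
      by (simp add: mmul_assoc[symmetric] act_comm_E)
    also have "\<dots> = ?P (a * b)"
      using rmodD(3)[OF F] by (simp add: BE mmul_assoc)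
    finally show ?thesis by simp
  qed
  moreover have "?P (a + b) = (\<lambda>i j. ?P a i j + ?P b i j)" for a b
  proof -
    have "?P (a + b) = ?P a + ?P b" by (simp add: rmodD(4)[OF F] mmul_add_left mmul_add_right)
    then show ?thesis by (simp add: plus_fun_def)
  qed
  moreover have "?P (sc c a) = (\<lambda>i j. c * ?P a i j)" for c a
  proof -
    have "?P (sc c a) = msc c (?P a)" by (simp add: rmodD(5)[OF F] mmul_msc_left mmul_msc_right)
    then show ?thesis by (simp add: msc_def)
  qed
  ultimately show ?thesis unfolding is_rmod_def retract_mod_def by auto
qed

lemma retract_mod_section: "C \<in> hom (m, \<rho>) (retract_mod r B C (m, \<rho>))"
  unfolding retract_mod_pair
proof (rule homI[OF Cm])
  fix a
  have "mmul r C (mmul m B (mmul m (\<rho> a) C)) = mmul m E (mmul m (\<rho> a) C)" by (rule CB_mmul)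
  also have "\<dots> = mmul m (\<rho> a) (mmul m E C)" by (simp add: mmul_assoc[symmetric] act_comm_E)
  also have "\<dots> = mmul m (\<rho> a) C" by (simp add: EC)
  finally show "mmul m (\<rho> a) C = mmul r C (mmul m B (mmul m (\<rho> a) C))" by simp
qed

lemma retract_mod_retraction: "B \<in> hom (retract_mod r B C (m, \<rho>)) (m, \<rho>)"
  unfolding retract_mod_pair
proof (rule homI[OF Bm])
  fix a
  have "mmul r (mmul m B (mmul m (\<rho> a) C)) B = mmul m B (mmul m (\<rho> a) E)"
    by (simp add: mmul_assoc CB)
  also have "\<dots> = mmul m B (\<rho> a)" by (simp add: act_comm_E mmul_assoc[symmetric] BE)
  finally show "mmul r (mmul m B (mmul m (\<rho> a) C)) B = mmul m B (\<rho> a)" .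
qed

lemma retract_mod_proj:
  assumes "is_proj sc (m, \<rho>)" shows "is_proj sc (retract_mod r B C (m, \<rho>))"
  unfolding is_proj_def
proof (intro conjI allI impI)
  show "is_rmod sc (retract_mod r B C (m, \<rho>))" by (rule retract_mod_rmod)
  fix M N g h
  assume MN: "is_rmod sc M" "is_rmod sc N" "surj_hom M N g" "h \<in> hom (retract_mod r B C (m, \<rho>)) N"
  obtain nM \<rho>M where M: "M = (nM, \<rho>M)" by fastforce
  obtain nN \<rho>N where N: "N = (nN, \<rho>N)" by fastforce
  have h: "h \<in> hom (r, \<lambda>a. mmul m B (mmul m (\<rho> a) C)) (nN, \<rho>N)" using MN(4) N by simp
  have Ch: "mmul r C h \<in> hom (m, \<rho>) N"
    using hom_comp[OF retract_mod_section[unfolded retract_mod_pair] h] N by simp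
  obtain k where k: "k \<in> hom (m, \<rho>) M" "mmul (fst M) k g = mmul r C h"
    using assms MN Ch unfolding is_proj_def by (metis fst_conv)
  have hm: "mat_on r nN h" using h by (rule hom_mat_on)
  have "mmul m B k \<in> hom (retract_mod r B C (m, \<rho>)) M"
    using hom_comp[OF retract_mod_retraction[unfolded retract_mod_pair] k(1)[unfolded M]] M by simp
  moreover have "mmul (fst M) (mmul m B k) g = h"
  proof -
    have "mmul (fst M) (mmul m B k) g = mmul m B (mmul r C h)" by (simp add: mmul_assoc k(2))
    also have "\<dots> = h" using BC hm by (simp add: mmul_assoc[symmetric] mmul_idm_left)
    finally show ?thesis .
  qed
  ultimately show "\<exists>h'\<in>hom (retract_mod r B C (m, \<rho>)) M. mmul (fst M) h' g = h" by blast
qed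

lemma mdim_hom_into_retract_mod:
  "mdim (hom_into (retract_mod r B C (m, \<rho>)) (nz, \<rho>z) U) = mdim (hom_fixed (m, \<rho>) (nz, \<rho>z) E U)"
  using mdim_hom_into_retract[OF retract_mod_section[unfolded retract_mod_pair]
      retract_mod_retraction[unfolded retract_mod_pair] BC, of nz \<rho>z U] CB
  by simp

end

section \<open>Idempotent matrices split\<close>

definition rows_mat :: "'k::zero rvec list \<Rightarrow> 'k mtx" where
  "rows_mat bl = (\<lambda>i j. if i < length bl then (bl ! i) j else 0)"

definition coord_mat :: "nat \<Rightarrow> 'k::field mtx \<Rightarrow> 'k rvec list \<Rightarrow> 'k mtx" where
  "coord_mat m E bl = (\<lambda>t i. if t < m \<and> i < length bl
     then module.representation vsc (set bl) (E t) (bl ! i) else 0)"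

lemma fixed_rows_subspace:
  fixes E :: "'k::field mtx"
  shows "module.subspace vsc {w. vmul m w E = w}"
proof -
  interpret V: vector_space "vsc :: 'k \<Rightarrow> 'k rvec \<Rightarrow> 'k rvec" by (rule vector_space_vsc)
  show ?thesis
    unfolding V.subspace_def by (auto simp: zero_fun_def vmul_add_left vsc_def vmul_scale_left)
qed

lemma idempotent_fixes_row_span:
  fixes E :: "'k::field mtx"
  assumes "mmul m E E = E" "w \<in> module.span vsc (E ` {..<m})"
  shows "vmul m w E = w"
proof -
  interpret V: vector_space "vsc :: 'k \<Rightarrow> 'k rvec \<Rightarrow> 'k rvec" by (rule vector_space_vsc)
  have "E ` {..<m} \<subseteq> {w. vmul m w E = w}"
    using assms(1) by (auto simp: mmul_row[symmetric])
  then have "V.span (E ` {..<m}) \<subseteq> {w. vmul m w E = w}"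
    by (rule V.span_minimal) (rule fixed_rows_subspace)
  then show ?thesis using assms(2) by blast
qed

context
  fixes E :: "'k::field mtx" and m :: nat and bl :: "'k rvec list"
  assumes dist: "distinct bl" and indep: "\<not> module.dependent vsc (set bl)"
    and rows_in_span: "\<And>t. t < m \<Longrightarrow> E t \<in> module.span vsc (set bl)"
begin

interpretation V: vector_space "vsc :: 'k \<Rightarrow> 'k rvec \<Rightarrow> 'k rvec" by (rule vector_space_vsc)

private lemma representation_vmul:
  "V.representation (set bl) (vmul m w E) b = (\<Sum>t<m. w t * V.representation (set bl) (E t) b)"
proof -
  have "V.representation (set bl) (vmul m w E) = (\<lambda>b. \<Sum>t<m. V.representation (set bl) (vsc (w t) (E t)) b)"
    unfolding vmul_as_sum
    by (rule V.representation_sum[OF indep]) (auto intro: V.span_scale rows_in_span)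
  then show ?thesis by (simp add: V.representation_scale[OF indep rows_in_span])
qed

lemma rows_mat_coord_mat:
  assumes fixed: "\<And>v. v \<in> set bl \<Longrightarrow> vmul m v E = v"
  shows "mmul m (rows_mat bl) (coord_mat m E bl) = idm (length bl)"
proof (intro ext)
  fix i i'
  show "mmul m (rows_mat bl) (coord_mat m E bl) i i' = idm (length bl) i i'"
  proof (cases "i < length bl \<and> i' < length bl")
    case True
    have "mmul m (rows_mat bl) (coord_mat m E bl) i i'
        = (\<Sum>t<m. (bl ! i) t * V.representation (set bl) (E t) (bl ! i'))"
      unfolding mmul_def rows_mat_def coord_mat_def using True by simp
    also have "\<dots> = V.representation (set bl) (vmul m (bl ! i) E) (bl ! i')"
      by (simp add: representation_vmul)
    also have "vmul m (bl ! i) E = bl ! i"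
      using fixed True by simp
    also have "V.representation (set bl) (bl ! i) (bl ! i') = (if i = i' then 1 else 0)"
      using V.representation_basis[OF indep, of "bl ! i"] True dist nth_eq_iff_index_eq by fastforce
    finally show ?thesis using True by (simp add: idm_def)
  qed (auto simp: mmul_def rows_mat_def coord_mat_def idm_def)
qed

lemma coord_mat_rows_mat:
  assumes "mat_on m m E"
  shows "mmul (length bl) (coord_mat m E bl) (rows_mat bl) = E"
proof (intro ext)
  fix t j
  show "mmul (length bl) (coord_mat m E bl) (rows_mat bl) t j = E t j"
  proof (cases "t < m")
    case True
    have inj: "inj_on (nth bl) {..<length bl}" using dist by (simp add: inj_on_nth)
    have img: "nth bl ` {..<length bl} = set bl" by (auto simp: set_conv_nth)
    have "mmul (length bl) (coord_mat m E bl) (rows_mat bl) t j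
        = (\<Sum>i<length bl. V.representation (set bl) (E t) (bl ! i) * (bl ! i) j)"
      unfolding mmul_def rows_mat_def coord_mat_def using True by simp
    also have "\<dots> = (\<Sum>b\<in>set bl. V.representation (set bl) (E t) b * b j)"
      unfolding img[symmetric] by (simp add: sum.reindex[OF inj])
    also have "\<dots> = (\<Sum>b\<in>set bl. vsc (V.representation (set bl) (E t) b) b) j"
      by (simp add: sum_fun_apply vsc_def)
    also have "(\<Sum>b\<in>set bl. vsc (V.representation (set bl) (E t) b) b) = E t"
      by (rule V.sum_representation_eq[OF indep rows_in_span[OF True]]) simp_all
    finally show ?thesis .
  qed (use assms in \<open>auto simp: mmul_def coord_mat_def mat_on_def\<close>)
qed

end

lemma idempotent_factorization:
  fixes E :: "'k::field mtx"
  assumes E: "mat_on m m E" and idem: "mmul m E E = E"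
  obtains r B C where "mat_on r m B" "mat_on m r C" "mmul m B C = idm r" "mmul r C B = E"
proof -
  interpret V: vector_space "vsc :: 'k \<Rightarrow> 'k rvec \<Rightarrow> 'k rvec" by (rule vector_space_vsc)
  obtain Bs where Bs: "Bs \<subseteq> E ` {..<m}" "V.independent Bs" "E ` {..<m} \<subseteq> V.span Bs"
    "card Bs = V.dim (E ` {..<m})"
    by (rule V.basis_exists)
  obtain bl where bl: "set bl = Bs" "distinct bl"
    using finite_distinct_list[OF finite_subset[OF Bs(1)]] by blast
  have fixed: "vmul m v E = v" if "v \<in> set bl" for v
    using that bl(1) Bs(1) by (intro idempotent_fixes_row_span[OF idem]) (auto intro: V.span_base)
  have rows: "E t \<in> V.span (set bl)" if "t < m" for t
    using that Bs(3) bl(1) by blast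
  show ?thesis
  proof
    have "vec_on m v" if "v \<in> set bl" for v
      using that Bs(1) bl(1) E by (auto simp: mat_on_def vec_on_def)
    then show "mat_on (length bl) m (rows_mat bl)"
      unfolding mat_on_def rows_mat_def vec_on_def by auto
    show "mat_on m (length bl) (coord_mat m E bl)"
      unfolding mat_on_def coord_mat_def by auto
    show "mmul m (rows_mat bl) (coord_mat m E bl) = idm (length bl)"
      using rows_mat_coord_mat[OF bl(2) _ rows fixed] Bs(2) bl(1) by simp
    show "mmul (length bl) (coord_mat m E bl) (rows_mat bl) = E"
      using coord_mat_rows_mat[OF bl(2) _ rows E] Bs(2) bl(1) by simp
  qed
qed

lemma idempotent_summand_proj:
  fixes E :: "'k::field mtx"
  assumes F: "is_proj sc (m, \<rho>)" and E: "E \<in> hom (m, \<rho>) (m, \<rho>)" and idem: "mmul m E E = E"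
  obtains P where "is_proj sc P"
    "\<And>n \<sigma> U. mdim (hom_into P (n, \<sigma>) U) = mdim (hom_fixed (m, \<rho>) (n, \<sigma>) E U)"
proof -
  have Fm: "is_rmod sc (m, \<rho>)" using F by (simp add: is_proj_def)
  obtain r B C where BC: "mat_on r m B" "mat_on m r C" "mmul m B C = idm r" "mmul r C B = E"
    using idempotent_factorization[OF hom_mat_on[OF E] idem] .
  show ?thesis
    using that retract_mod_proj[OF Fm E BC F] mdim_hom_into_retract_mod[OF Fm E BC] by blast
qed

section \<open>Polynomials in a matrix and lifting of idempotents\<close>

primrec mat_pow :: "nat \<Rightarrow> 'k::comm_ring_1 mtx \<Rightarrow> nat \<Rightarrow> 'k mtx" where
  "mat_pow m A 0 = idm m"
| "mat_pow m A (Suc t) = mmul m A (mat_pow m A t)"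

definition mat_poly :: "nat \<Rightarrow> 'k::comm_ring_1 poly \<Rightarrow> 'k mtx \<Rightarrow> 'k mtx" where
  "mat_poly m p A = (\<Sum>t\<le>degree p. msc (coeff p t) (mat_pow m A t))"

lemma mat_on_mat_pow: "mat_on m m A \<Longrightarrow> mat_on m m (mat_pow m A t)"
  by (induction t) (auto simp: mat_on_idm intro: mat_on_mmul)

lemma mat_on_mat_poly: "mat_on m m A \<Longrightarrow> mat_on m m (mat_poly m p A)"
  unfolding mat_poly_def by (intro mat_on_sum mat_on_msc mat_on_mat_pow)

lemma mat_poly_eq_sum_lessThan:
  assumes "degree p < L"
  shows "mat_poly m p A = (\<Sum>t<L. msc (coeff p t) (mat_pow m A t))"
  unfolding mat_poly_def
proof (rule sum.mono_neutral_left)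
  show "\<forall>i\<in>{..<L} - {..degree p}. msc (coeff p i) (mat_pow m A i) = 0"
    using coeff_eq_0[of p] by auto
qed (use assms in auto)

lemma mat_poly_add: "mat_poly m (p + q) A = mat_poly m p A + mat_poly m q A"
proof -
  define L where "L = Suc (max (degree p) (degree q))"
  have "degree (p + q) < L" "degree p < L" "degree q < L"
    using degree_add_le_max[of p q] by (auto simp: L_def)
  then show ?thesis
    by (simp add: mat_poly_eq_sum_lessThan[of _ L] msc_add sum.distrib)
qed

lemma mat_poly_smult: "mat_poly m (smult c p) A = msc c (mat_poly m p A)"
proof -
  define L where "L = Suc (degree p)"
  have "degree (smult c p) < L" "degree p < L"
    using degree_smult_le[of c p] by (auto simp: L_def)
  then show ?thesis
    by (simp add: mat_poly_eq_sum_lessThan[of _ L] msc_sum_right msc_msc)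
qed

lemma mmul_msc_idm: "mat_on m c X \<Longrightarrow> mmul m (msc a (idm m)) X = msc a X"
  by (simp add: mmul_msc_left mmul_idm_left)

lemma mat_poly_pCons: "mat_poly m (pCons a p) A = msc a (idm m) + mmul m A (mat_poly m p A)"
proof -
  define L where "L = Suc (degree p)"
  have d1: "degree (pCons a p) < Suc L" using degree_pCons_le[of a p] by (simp add: L_def)
  have d2: "degree p < L" by (simp add: L_def)
  have "mat_poly m (pCons a p) A = (\<Sum>t<Suc L. msc (coeff (pCons a p) t) (mat_pow m A t))"
    by (rule mat_poly_eq_sum_lessThan[OF d1])
  also have "\<dots> = msc a (idm m) + (\<Sum>t<L. msc (coeff p t) (mat_pow m A (Suc t)))"
    by (simp only: sum.lessThan_Suc_shift coeff_pCons_0 coeff_pCons_Suc mat_pow.simps(1))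
  also have "(\<Sum>t<L. msc (coeff p t) (mat_pow m A (Suc t))) = mmul m A (mat_poly m p A)"
    by (simp add: mat_poly_eq_sum_lessThan[OF d2] mmul_sum_right mmul_msc_right)
  finally show ?thesis .
qed

lemma mat_poly_zero [simp]: "mat_poly m 0 A = 0"
  by (simp add: mat_poly_def)

lemma mat_poly_mult:
  assumes Am: "mat_on m m A"
  shows "mat_poly m (p * q) A = mmul m (mat_poly m p A) (mat_poly m q A)"
proof (induction p)
  case 0
  then show ?case by simp
next
  case (pCons a p)
  have qm: "mat_on m m (mat_poly m q A)" by (rule mat_on_mat_poly[OF Am])
  have "mat_poly m (pCons a p * q) A = msc a (mat_poly m q A) + (msc 0 (idm m) + mmul m A (mat_poly m (p * q) A))"
    by (simp add: mat_poly_add mat_poly_smult mat_poly_pCons del: msc_zero)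
  also have "\<dots> = msc a (mat_poly m q A) + mmul m A (mmul m (mat_poly m p A) (mat_poly m q A))"
    using pCons.IH by simp
  also have "\<dots> = mmul m (mat_poly m (pCons a p) A) (mat_poly m q A)"
    by (simp add: mat_poly_pCons mmul_add_left mmul_msc_idm[OF qm] mmul_assoc)
  finally show ?case .
qed

lemma mat_poly_hom:
  assumes F: "is_rmod sc (m, \<rho>)" and A: "A \<in> hom (m, \<rho>) (m, \<rho>)"
  shows "mat_poly m p A \<in> hom (m, \<rho>) (m, \<rho>)"
proof -
  have mp: "mat_pow m A t \<in> hom (m, \<rho>) (m, \<rho>)" for t
    by (induction t) (auto intro: idm_hom[OF F] hom_comp[OF A])
  then have "\<And>T. finite T \<Longrightarrow> (\<Sum>t\<in>T. msc (coeff p t) (mat_pow m A t)) \<in> hom (m, \<rho>) (m, \<rho>)"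
  proof -
    fix T :: "nat set" assume "finite T"
    then show "(\<Sum>t\<in>T. msc (coeff p t) (mat_pow m A t)) \<in> hom (m, \<rho>) (m, \<rho>)"
    proof (induction T rule: finite_induct)
      case empty
      show ?case by (simp only: sum.empty) (rule hom_zero)
    next
      case (insert x F)
      show ?case by (simp only: sum.insert[OF insert(1,2)]) (rule hom_add[OF hom_msc[OF mp] insert.IH])
    qed
  qed
  then show ?thesis unfolding mat_poly_def by blast
qed

lemma mat_pow_intertwine:
  assumes pim: "mat_on m m' \<pi>" and comm: "mmul m A \<pi> = mmul m' \<pi> \<epsilon>"
  shows "mmul m (mat_pow m A t) \<pi> = mmul m' \<pi> (mat_pow m' \<epsilon> t)"
proof (induction t)
  case 0
  then show ?case using pim by (simp add: mmul_idm_left mmul_idm_right)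
next
  case (Suc t)
  have "mmul m (mat_pow m A (Suc t)) \<pi> = mmul m A (mmul m' \<pi> (mat_pow m' \<epsilon> t))"
    by (simp add: mmul_assoc Suc)
  also have "\<dots> = mmul m' \<pi> (mat_pow m' \<epsilon> (Suc t))"
    by (simp add: mmul_assoc[symmetric] comm)
  finally show ?case .
qed

lemma mat_poly_intertwine:
  assumes pim: "mat_on m m' \<pi>" and comm: "mmul m A \<pi> = mmul m' \<pi> \<epsilon>"
  shows "mmul m (mat_poly m p A) \<pi> = mmul m' \<pi> (mat_poly m' p \<epsilon>)"
  unfolding mat_poly_def
  by (simp only: mmul_sum_left mmul_sum_right mmul_msc_left mmul_msc_right mat_pow_intertwine[OF assms])

lemma mat_pow_idem: "mat_on m m \<epsilon> \<Longrightarrow> mmul m \<epsilon> \<epsilon> = \<epsilon> \<Longrightarrow> t > 0 \<Longrightarrow> mat_pow m \<epsilon> t = \<epsilon>"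
proof (induction t)
  case 0 then show ?case by simp
next
  case (Suc t)
  then show ?case by (cases t) (auto simp: mmul_idm_right)
qed

lemma mat_poly_idem:
  assumes "mat_on m m \<epsilon>" "mmul m \<epsilon> \<epsilon> = \<epsilon>" "poly p 0 = 0" "poly p 1 = 1"
  shows "mat_poly m p \<epsilon> = \<epsilon>"
proof -
  have "msc (coeff p t) (mat_pow m \<epsilon> t) = msc (coeff p t) \<epsilon>" for t
    using assms mat_pow_idem[OF assms(1,2), of t] by (cases t) (auto simp: poly_0_coeff_0)
  then have "mat_poly m p \<epsilon> = msc (\<Sum>t\<le>degree p. coeff p t) \<epsilon>"
    unfolding mat_poly_def by (simp add: msc_sum_left)
  also have "(\<Sum>t\<le>degree p. coeff p t) = poly p 1"
    by (simp add: poly_altdef)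
  finally show ?thesis using assms by simp
qed

lemma mat_poly_annihilator:
  fixes A :: "'k::field mtx"
  assumes Am: "mat_on m m A"
  shows "\<exists>g. g \<noteq> 0 \<and> mat_poly m g A = 0"
proof -
  define L where "L = Suc (m * m)"
  define xs where "xs = map (mat_pow m A) [0..<L]"
  have "\<not> lin_ind xs"
  proof
    assume "lin_ind xs"
    moreover have "\<forall>X\<in>set xs. mat_on m m X" using mat_on_mat_pow[OF Am] by (auto simp: xs_def)
    ultimately have "length xs \<le> m * m" by (rule lin_ind_length_le)
    then show False by (simp add: xs_def L_def)
  qed
  then obtain c where c: "(\<lambda>i j. \<Sum>l<L. c l * (xs ! l) i j) = (\<lambda>i j. 0)" "\<exists>l<L. c l \<noteq> 0"
    unfolding lin_ind_def by (auto simp: xs_def)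
  define g where "g = Poly (map c [0..<L])"
  have cg: "coeff g t = (if t < L then c t else 0)" for t
    by (simp add: g_def nth_default_def)
  have gnz: "g \<noteq> 0" using c(2) cg by (metis coeff_0)
  have dg: "degree g < L"
  proof -
    have "degree g \<le> L" using degree_Poly[of "map c [0..<L]"] by (simp add: g_def)
    moreover have "degree g \<noteq> L"
      using cg[of L] \<open>g \<noteq> 0\<close> leading_coeff_0_iff by fastforce
    ultimately show ?thesis by simp
  qed
  have "mat_poly m g A = (\<Sum>t<L. msc (c t) (mat_pow m A t))"
    using dg by (simp add: mat_poly_eq_sum_lessThan cg)
  also have "\<dots> = (\<Sum>l<L. msc (c l) (xs ! l))"
    by (rule sum.cong) (auto simp: xs_def)
  also have "\<dots> = (\<lambda>i j. \<Sum>l<L. c l * (xs ! l) i j)"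
    by (rule lincomb_eq_sum[symmetric])
  also have "\<dots> = 0" using c(1) by (simp add: zero_fun_def)
  finally show ?thesis using \<open>g \<noteq> 0\<close> by blast
qed

text \<open>Lifting of idempotents: \<open>p\<close> is \<open>1 - (1 - R/R(1))\<^sup>s\<close> where \<open>g x (x - 1) = (x - 1)\<^sup>s R\<close>
  and \<open>R(1) \<noteq> 0\<close>; it is divisible by \<open>R\<close>, and \<open>1 - p\<close> by \<open>(x - 1)\<^sup>s\<close>.\<close>

lemma idempotent_poly_exists:
  fixes g :: "'k::field poly"
  assumes "g \<noteq> 0"
  obtains p where "poly p 0 = 0" "poly p 1 = 1" "g dvd p * p - p"
proof -
  define Y :: "'k poly" where "Y = [:-1, 1:]"
  define G where "G = g * ([:0, 1:] * Y)"
  have Gnz: "G \<noteq> 0" using assms unfolding G_def mult_eq_0_iff by (auto simp: Y_def)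
  have G0: "poly G 0 = 0" and G1: "poly G 1 = 0" by (simp_all add: G_def Y_def)
  define s where "s = order 1 G"
  obtain R where R: "G = Y ^ s * R" "\<not> Y dvd R"
    using order_decomp[OF Gnz, of 1] by (auto simp: Y_def s_def)
  have s0: "s \<noteq> 0" using G1 Gnz order_root[of G 1] by (simp add: s_def)
  define c where "c = poly R 1"
  have c0: "c \<noteq> 0" using R(2) poly_eq_0_iff_dvd[of R 1] by (simp add: c_def Y_def)
  have R0: "poly R 0 = 0" using G0 R(1) by (simp add: Y_def)
  define N where "N = 1 - smult (inverse c) R"
  define p where "p = 1 - N ^ s"
  have "R dvd p"
  proof -
    have "p = (1 - N) * (\<Sum>i<s. N ^ i)" unfolding p_def by (rule one_diff_power_eq)
    also have "1 - N = R * [:inverse c:]" by (simp add: N_def)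
    finally have "p = R * ([:inverse c:] * (\<Sum>i<s. N ^ i))" by (simp only: mult.assoc)
    then show ?thesis by (rule dvdI)
  qed
  moreover have "Y ^ s dvd N ^ s"
  proof -
    have "poly N 1 = 0" by (simp add: N_def c0 c_def[symmetric])
    then show ?thesis using poly_eq_0_iff_dvd[of N 1] by (simp add: Y_def dvd_power_same)
  qed
  ultimately have "Y ^ s * R dvd N ^ s * p" by (rule mult_dvd_mono[rotated])
  moreover have "p * p - p = - (N ^ s * p)" by (simp add: p_def algebra_simps)
  ultimately have "G dvd p * p - p" using R(1) by simp
  then have "g dvd p * p - p" unfolding G_def by (rule dvd_mult_left)
  moreover have "poly p 0 = 0" by (simp add: p_def N_def R0)
  moreover have "poly p 1 = 1" using s0 by (simp add: p_def N_def c0 c_def[symmetric])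
  ultimately show ?thesis using that by blast
qed

lemma idempotent_lift:
  fixes A \<pi> \<epsilon> :: "'k::field mtx"
  assumes A: "mat_on m m A" and \<epsilon>: "mat_on m' m' \<epsilon>" and \<pi>: "mat_on m m' \<pi>"
    and idem: "mmul m' \<epsilon> \<epsilon> = \<epsilon>" and comm: "mmul m A \<pi> = mmul m' \<pi> \<epsilon>"
  obtains p where "mmul m (mat_poly m p A) (mat_poly m p A) = mat_poly m p A"
    "mmul m (mat_poly m p A) \<pi> = mmul m' \<pi> \<epsilon>"
proof -
  obtain g where g: "g \<noteq> 0" "mat_poly m g A = 0" using mat_poly_annihilator[OF A] by blast
  obtain p where p: "poly p 0 = 0" "poly p 1 = 1" "g dvd p * p - p"
    using idempotent_poly_exists[OF g(1)] .
  obtain w where w: "p * p = g * w + p" using p(3) by (metis dvdE diff_eq_eq)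
  have "mmul m (mat_poly m p A) (mat_poly m p A) = mat_poly m (g * w + p) A"
    by (simp add: w mat_poly_mult[OF A, symmetric])
  also have "\<dots> = mat_poly m p A"
    by (simp add: mat_poly_add mat_poly_mult[OF A] g(2))
  finally have "mmul m (mat_poly m p A) (mat_poly m p A) = mat_poly m p A" .
  moreover have "mmul m (mat_poly m p A) \<pi> = mmul m' \<pi> \<epsilon>"
    using mat_poly_intertwine[OF \<pi> comm] mat_poly_idem[OF \<epsilon> idem p(1,2)] by simp
  ultimately show ?thesis using that by blast
qed

section \<open>Free modules over an algebra with a basis\<close>

locale fd_alg_basis =
  fixes sc :: "'k::field \<Rightarrow> 'a::ring_1 \<Rightarrow> 'a" and bs :: "'a list"
  assumes vs: "vector_space sc"
    and dist: "distinct bs" and indep: "\<not> module.dependent sc (set bs)"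
    and spanning: "module.span sc (set bs) = UNIV"
    and alg: "\<And>c x y. sc c (x * y) = sc c x * y" "\<And>c x y. sc c (x * y) = x * sc c y"
begin

interpretation V: vector_space sc by (rule vs)

abbreviation "N \<equiv> length bs"

definition coord :: "'a \<Rightarrow> nat \<Rightarrow> 'k" where
  "coord a i = (if i < N then V.representation (set bs) a (bs ! i) else 0)"

lemma inj_bs: "inj_on (nth bs) {..<N}" using dist by (simp add: inj_on_nth)
lemma img_bs: "nth bs ` {..<N} = set bs" by (auto simp: set_conv_nth)

lemma coord_expand: "(\<Sum>i<N. sc (coord a i) (bs ! i)) = a"
proof -
  have "(\<Sum>i<N. sc (coord a i) (bs ! i)) = (\<Sum>i<N. sc (V.representation (set bs) a (bs ! i)) (bs ! i))"
    by (simp add: coord_def)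
  also have "\<dots> = (\<Sum>b\<in>set bs. sc (V.representation (set bs) a b) b)"
    unfolding img_bs[symmetric] by (simp add: sum.reindex[OF inj_bs])
  also have "\<dots> = a" by (rule V.sum_representation_eq) (use indep spanning in auto)
  finally show ?thesis .
qed

lemma coord_add: "coord (a + b) i = coord a i + coord b i"
  unfolding coord_def using V.representation_add[OF indep] spanning by auto

lemma coord_scale: "coord (sc c a) i = c * coord a i"
  unfolding coord_def using V.representation_scale[OF indep] spanning by auto

lemma coord_zero: "coord 0 i = 0"
  unfolding coord_def by (simp add: V.representation_zero)

lemma coord_sum: "coord (\<Sum>l\<in>I. x l) i = (\<Sum>l\<in>I. coord (x l) i)"
  by (induction I rule: infinite_finite_induct) (auto simp: coord_add coord_zero)

lemma coord_basis: "j < N \<Longrightarrow> coord (bs ! j) i = (if i = j then 1 else 0)"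
proof -
  assume j: "j < N"
  have "bs ! j \<in> set bs" using j by simp
  then have r: "V.representation (set bs) (bs ! j) = (\<lambda>v. if v = bs ! j then 1 else 0)"
    by (rule V.representation_basis[OF indep])
  show ?thesis using j dist by (auto simp: coord_def r nth_eq_iff_index_eq)
qed

lemma coord_lincomb: "coord (\<Sum>l\<in>I. sc (c l) (z l)) i = (\<Sum>l\<in>I. c l * coord (z l) i)"
  by (simp add: coord_sum coord_scale)

lemma lincomb_mult: "(\<Sum>i<N. sc (coord x i) (bs ! i * y)) = x * y"
proof -
  have "x * y = (\<Sum>i<N. sc (coord x i) (bs ! i)) * y" by (simp add: coord_expand)
  also have "\<dots> = (\<Sum>i<N. sc (coord x i) (bs ! i) * y)" by (simp add: sum_distrib_right)
  also have "\<dots> = (\<Sum>i<N. sc (coord x i) (bs ! i * y))" by (simp add: alg(1))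
  finally show ?thesis by simp
qed

lemma N_pos: "0 < N"
proof (rule ccontr)
  assume "\<not> 0 < N"
  then have "bs = []" by simp
  then have "module.span sc (set bs) = {0}" by (simp add: V.span_empty)
  then show False using spanning by (metis UNIV_I singletonD zero_neq_one)
qed

lemma rmod_lincomb:
  assumes "is_rmod sc (n, \<rho>)"
  shows "\<rho> x = (\<Sum>i<N. msc (coord x i) (\<rho> (bs ! i)))"
proof -
  have "\<rho> x = \<rho> (\<Sum>i<N. sc (coord x i) (bs ! i))" by (simp add: coord_expand)
  also have "\<dots> = (\<Sum>i<N. msc (coord x i) (\<rho> (bs ! i)))"
    by (simp add: rmod_sum[OF vs assms] rmodD(5)[OF assms])
  finally show ?thesis .
qed

lemma block_sum:
  assumes j: "j < k" and h: "\<And>t. t < k * N \<Longrightarrow> t div N \<noteq> j \<Longrightarrow> h t = 0"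
  shows "(\<Sum>t<k * N. h t) = (\<Sum>i<N. h (j * N + i))"
proof -
  have sub: "(\<lambda>i. j * N + i) ` {..<N} \<subseteq> {..<k * N}"
  proof
    fix t assume "t \<in> (\<lambda>i. j * N + i) ` {..<N}"
    then obtain i where i: "i < N" "t = j * N + i" by blast
    have "j * N + i < j * N + N" using i by simp
    also have "\<dots> = Suc j * N" by simp
    also have "\<dots> \<le> k * N" using j by (intro mult_le_mono1) simp
    finally show "t \<in> {..<k * N}" using i by simp
  qed
  have "(\<Sum>t<k * N. h t) = (\<Sum>t\<in>(\<lambda>i. j * N + i) ` {..<N}. h t)"
  proof (rule sum.mono_neutral_right[OF _ sub])
    show "\<forall>t\<in>{..<k * N} - (\<lambda>i. j * N + i) ` {..<N}. h t = 0"
    proof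
      fix t assume t: "t \<in> {..<k * N} - (\<lambda>i. j * N + i) ` {..<N}"
      have "t div N \<noteq> j"
      proof
        assume "t div N = j"
        then have "t = j * N + t mod N" by (metis div_mult_mod_eq mult.commute)
        moreover have "t mod N < N" using N_pos by simp
        ultimately show False using t by blast
      qed
      then show "h t = 0" using h t by auto
    qed
  qed simp
  also have "\<dots> = (\<Sum>i<N. h (j * N + i))"
    by (simp add: sum.reindex inj_on_def)
  finally show ?thesis .
qed

lemma div_mod_block: "i < N \<Longrightarrow> (j * N + i) div N = j" "i < N \<Longrightarrow> (j * N + i) mod N = i"
  using N_pos by auto

lemma block_lt: "j < k \<Longrightarrow> i < N \<Longrightarrow> j * N + i < k * N"
proof -
  assume "j < k" "i < N"
  then have "j * N + i < Suc j * N" by simp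
  also have "\<dots> \<le> k * N" using \<open>j < k\<close> by (intro mult_le_mono1) simp
  finally show ?thesis .
qed

text \<open>\<open>\<Lambda>\<^sup>k\<close> is \<open>K\<^bsup>k N\<^esup>\<close> with \<open>N = length bs\<close>: coordinate \<open>j N + i\<close> is the \<open>i\<close>-th coordinate,
  with respect to \<open>bs\<close>, of the \<open>j\<close>-th component. \<open>free_vec k j x\<close> is \<open>x\<close> placed in component \<open>j\<close>,
  and \<open>free_hom k X w\<close> is the homomorphism \<open>\<Lambda>\<^sup>k \<rightarrow> X\<close> sending the generator \<open>free_gen k j\<close>
  to \<open>w j\<close>.\<close>

definition free_vec :: "nat \<Rightarrow> nat \<Rightarrow> 'a \<Rightarrow> 'k rvec" where
  "free_vec k j x = (\<lambda>u. if u < k * N \<and> u div N = j then coord x (u mod N) else 0)"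

definition free_mod :: "nat \<Rightarrow> ('a, 'k) rmod" where
  "free_mod k = (k * N, \<lambda>a t. if t < k * N then free_vec k (t div N) (bs ! (t mod N) * a) else (\<lambda>u. 0))"

definition free_act :: "nat \<Rightarrow> 'a \<Rightarrow> 'k mtx" where
  "free_act k = snd (free_mod k)"

lemma free_mod_eq: "free_mod k = (k * N, free_act k)" by (simp add: free_mod_def free_act_def)

lemma free_act_eq: "free_act k a = (\<lambda>t. if t < k * N then free_vec k (t div N) (bs ! (t mod N) * a) else (\<lambda>u. 0))"
  by (simp add: free_act_def free_mod_def)

lemma free_vec_add: "free_vec k j (x + y) = free_vec k j x + free_vec k j y"
  unfolding free_vec_def by (auto intro!: ext simp: coord_add)

lemma free_vec_scale: "free_vec k j (sc c x) = (\<lambda>u. c * free_vec k j x u)"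
  unfolding free_vec_def by (auto intro!: ext simp: coord_scale)

lemma free_vec_mult_right:
  assumes j: "j < k"
  shows "vmul (k * N) (free_vec k j x) (free_act k b) = free_vec k j (x * b)"
proof (rule ext)
  fix u
  have "vmul (k * N) (free_vec k j x) (free_act k b) u = (\<Sum>t<k * N. free_vec k j x t * free_act k b t u)"
    by (simp add: vmul_def)
  also have "\<dots> = (\<Sum>i<N. free_vec k j x (j * N + i) * free_act k b (j * N + i) u)"
    by (rule block_sum[OF j]) (auto simp: free_vec_def)
  also have "\<dots> = (\<Sum>i<N. coord x i * free_vec k j (bs ! i * b) u)"
    by (rule sum.cong) (auto simp: free_vec_def free_act_eq div_mod_block block_lt[OF j])
  also have "\<dots> = free_vec k j (x * b) u"
  proof (cases "u < k * N \<and> u div N = j")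
    case True
    have "(\<Sum>i<N. coord x i * free_vec k j (bs ! i * b) u) = (\<Sum>i<N. coord x i * coord (bs ! i * b) (u mod N))"
      using True by (simp add: free_vec_def)
    also have "\<dots> = coord (\<Sum>i<N. sc (coord x i) (bs ! i * b)) (u mod N)"
      by (simp add: coord_lincomb)
    also have "\<dots> = coord (x * b) (u mod N)" by (simp add: lincomb_mult)
    finally show ?thesis using True by (simp add: free_vec_def)
  next
    case False
    then show ?thesis by (auto simp: free_vec_def)
  qed
  finally show "vmul (k * N) (free_vec k j x) (free_act k b) u = free_vec k j (x * b) u" .
qed

lemma free_vec_basis: "t < k * N \<Longrightarrow> free_vec k (t div N) (bs ! (t mod N)) = uvec t"
proof (rule ext)
  fix u assume t: "t < k * N"
  have tm: "t mod N < N" using N_pos by simp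
  show "free_vec k (t div N) (bs ! (t mod N)) u = uvec t u"
  proof (cases "u < k * N \<and> u div N = t div N")
    case True
    then have "u = t \<longleftrightarrow> u mod N = t mod N" by (metis div_mult_mod_eq)
    then show ?thesis using True tm by (auto simp: free_vec_def uvec_def coord_basis)
  next
    case False
    then show ?thesis using t by (auto simp: free_vec_def uvec_def)
  qed
qed

lemma free_mod_rmod: "is_rmod sc (free_mod k)"
proof -
  have "mat_on (k * N) (k * N) (free_act k a)" for a
    unfolding mat_on_def free_act_eq free_vec_def by auto
  moreover have "free_act k 1 = idm (k * N)"
  proof (rule ext)
    fix t
    show "free_act k 1 t = idm (k * N) t"
      by (cases "t < k * N") (auto simp: free_act_eq free_vec_basis uvec_def idm_def intro!: ext)
  qed
  moreover have "free_act k (a * b) = mmul (k * N) (free_act k a) (free_act k b)" for a b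
  proof (rule ext)
    fix t
    show "free_act k (a * b) t = mmul (k * N) (free_act k a) (free_act k b) t"
    proof (cases "t < k * N")
      case True
      have j: "t div N < k" using True by (metis div_less_iff_less_mult N_pos)
      show ?thesis
        using True free_vec_mult_right[OF j, of "bs ! (t mod N) * a" b]
        by (simp add: mmul_row free_act_eq mult.assoc)
    next
      case False
      then show ?thesis by (simp add: mmul_row free_act_eq vmul_def)
    qed
  qed
  moreover have "free_act k (a + b) = (\<lambda>i j. free_act k a i j + free_act k b i j)" for a b
    by (auto intro!: ext simp: free_act_eq distrib_left free_vec_add)
  moreover have "free_act k (sc c a) = (\<lambda>i j. c * free_act k a i j)" for c a
    by (auto intro!: ext simp: free_act_eq alg(2)[symmetric] free_vec_scale)
  ultimately show ?thesis unfolding is_rmod_def free_mod_eq by auto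
qed

definition free_gen :: "nat \<Rightarrow> nat \<Rightarrow> 'k rvec" where
  "free_gen k j = free_vec k j 1"

definition free_hom :: "nat \<Rightarrow> ('a, 'k) rmod \<Rightarrow> (nat \<Rightarrow> 'k rvec) \<Rightarrow> 'k mtx" where
  "free_hom k X w = (\<lambda>t. if t < k * N then vmul (fst X) (w (t div N)) (snd X (bs ! (t mod N))) else (\<lambda>u. 0))"

lemma free_vec_free_hom:
  assumes X: "is_rmod sc (n, \<rho>)" and j: "j < k"
  shows "vmul (k * N) (free_vec k j x) (free_hom k (n, \<rho>) w) = vmul n (w j) (\<rho> x)"
proof (rule ext)
  fix u
  have "vmul (k * N) (free_vec k j x) (free_hom k (n, \<rho>) w) u = (\<Sum>t<k * N. free_vec k j x t * free_hom k (n, \<rho>) w t u)"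
    by (simp add: vmul_def)
  also have "\<dots> = (\<Sum>i<N. free_vec k j x (j * N + i) * free_hom k (n, \<rho>) w (j * N + i) u)"
    by (rule block_sum[OF j]) (auto simp: free_vec_def)
  also have "\<dots> = (\<Sum>i<N. coord x i * vmul n (w j) (\<rho> (bs ! i)) u)"
    by (rule sum.cong) (auto simp: free_vec_def free_hom_def div_mod_block block_lt[OF j])
  also have "\<dots> = vmul n (w j) (\<rho> x) u"
    by (simp add: rmod_lincomb[OF X, of x] vmul_sum_right sum_fun_apply vmul_msc_right)
  finally show "vmul (k * N) (free_vec k j x) (free_hom k (n, \<rho>) w) u = vmul n (w j) (\<rho> x) u" .
qed

lemma free_hom_hom:
  assumes X: "is_rmod sc (n, \<rho>)"
  shows "free_hom k (n, \<rho>) w \<in> hom (free_mod k) (n, \<rho>)"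
  unfolding free_mod_eq
proof (rule homI)
  show "mat_on (k * N) n (free_hom k (n, \<rho>) w)"
    unfolding mat_on_def free_hom_def using vec_on_vmul[OF rmodD(1)[OF X]] by (auto simp: vec_on_def)
  fix a
  show "mmul (k * N) (free_act k a) (free_hom k (n, \<rho>) w) = mmul n (free_hom k (n, \<rho>) w) (\<rho> a)"
  proof (rule ext)
    fix t
    show "mmul (k * N) (free_act k a) (free_hom k (n, \<rho>) w) t = mmul n (free_hom k (n, \<rho>) w) (\<rho> a) t"
    proof (cases "t < k * N")
      case True
      have j: "t div N < k" using True by (metis div_less_iff_less_mult N_pos)
      have "mmul (k * N) (free_act k a) (free_hom k (n, \<rho>) w) t
          = vmul n (w (t div N)) (\<rho> (bs ! (t mod N) * a))"
        using True by (simp add: mmul_row free_act_eq free_vec_free_hom[OF X j])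
      also have "\<dots> = vmul n (vmul n (w (t div N)) (\<rho> (bs ! (t mod N)))) (\<rho> a)"
        by (simp add: rmodD(3)[OF X] vmul_mmul)
      finally show ?thesis using True by (simp add: mmul_row free_hom_def)
    next
      case False
      then show ?thesis by (simp add: mmul_row free_hom_def vmul_def free_act_eq)
    qed
  qed
qed

lemma free_gen_free_hom:
  assumes X: "is_rmod sc (n, \<rho>)" and j: "j < k" and w: "vec_on n (w j)"
  shows "vmul (k * N) (free_gen k j) (free_hom k (n, \<rho>) w) = w j"
  unfolding free_gen_def using free_vec_free_hom[OF X j] rmodD(2)[OF X] vmul_idm[OF w] by simp

lemma hom_from_free_mod:
  assumes X: "is_rmod sc (n, \<rho>)" and \<phi>: "\<phi> \<in> hom (free_mod k) (n, \<rho>)"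
  shows "\<phi> = free_hom k (n, \<rho>) (\<lambda>j. vmul (k * N) (free_gen k j) \<phi>)"
proof (rule ext)
  fix t
  have \<phi>': "\<phi> \<in> hom (k * N, free_act k) (n, \<rho>)" using \<phi> by (simp add: free_mod_eq)
  show "\<phi> t = free_hom k (n, \<rho>) (\<lambda>j. vmul (k * N) (free_gen k j) \<phi>) t"
  proof (cases "t < k * N")
    case True
    have j: "t div N < k" using True by (metis div_less_iff_less_mult N_pos)
    have "\<phi> t = vmul (k * N) (uvec t) \<phi>" using True by (simp add: vmul_uvec)
    also have "uvec t = free_vec k (t div N) (1 * bs ! (t mod N))" using free_vec_basis[OF True] by simp
    also have "\<dots> = vmul (k * N) (free_gen k (t div N)) (free_act k (bs ! (t mod N)))"
      by (simp add: free_gen_def free_vec_mult_right[OF j])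
    also have "vmul (k * N) \<dots> \<phi> = vmul (k * N) (free_gen k (t div N)) (mmul (k * N) (free_act k (bs ! (t mod N))) \<phi>)"
      by (simp add: vmul_mmul)
    also have "\<dots> = vmul n (vmul (k * N) (free_gen k (t div N)) \<phi>) (\<rho> (bs ! (t mod N)))"
      by (simp add: hom_eq[OF \<phi>'] vmul_mmul)
    finally show ?thesis using True by (simp add: free_hom_def)
  next
    case False
    then show ?thesis using hom_mat_on[OF \<phi>'] by (auto simp: free_hom_def mat_on_def intro!: ext)
  qed
qed

lemma free_gen_out: "k \<le> j \<Longrightarrow> free_gen k j = (\<lambda>u. 0)"
  unfolding free_gen_def free_vec_def by (auto intro!: ext) (metis div_less_iff_less_mult N_pos leD)

lemma hom_free_mod_eqI:
  assumes X: "is_rmod sc (n, \<rho>)"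
    and \<phi>: "\<phi> \<in> hom (free_mod k) (n, \<rho>)" and \<psi>: "\<psi> \<in> hom (free_mod k) (n, \<rho>)"
    and gens: "\<And>j. j < k \<Longrightarrow> vmul (k * N) (free_gen k j) \<phi> = vmul (k * N) (free_gen k j) \<psi>"
  shows "\<phi> = \<psi>"
proof -
  have "vmul (k * N) (free_gen k j) \<phi> = vmul (k * N) (free_gen k j) \<psi>" for j
    using gens by (cases "j < k") (auto simp: free_gen_out)
  then have "(\<lambda>j. vmul (k * N) (free_gen k j) \<phi>) = (\<lambda>j. vmul (k * N) (free_gen k j) \<psi>)"
    by blast
  then show ?thesis using hom_from_free_mod[OF X \<phi>] hom_from_free_mod[OF X \<psi>] by simp
qed

lemma free_mod_proj: "is_proj sc (free_mod k)"
  unfolding is_proj_def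
proof (intro conjI allI impI)
  show "is_rmod sc (free_mod k)" by (rule free_mod_rmod)
  fix M Z g h
  assume MZ: "is_rmod sc M" "is_rmod sc Z" "surj_hom M Z g" "h \<in> hom (free_mod k) Z"
  obtain nM \<rho>M where M: "M = (nM, \<rho>M)" by fastforce
  obtain nZ \<rho>Z where Z: "Z = (nZ, \<rho>Z)" by fastforce
  have h: "h \<in> hom (k * N, free_act k) (nZ, \<rho>Z)" using MZ(4) Z by (simp add: free_mod_eq)
  have "\<forall>j. \<exists>v. vec_on nM v \<and> vmul nM v g = vmul (k * N) (free_gen k j) h"
    using MZ(3) M Z vec_on_vmul[OF hom_mat_on[OF h]] unfolding surj_hom_def by simp
  then obtain v where v: "\<And>j. vec_on nM (v j)" "\<And>j. vmul nM (v j) g = vmul (k * N) (free_gen k j) h"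
    by metis
  have g: "g \<in> hom (nM, \<rho>M) (nZ, \<rho>Z)" using MZ(3) M Z by (simp add: surj_hom_def)
  have lift: "free_hom k M v \<in> hom (free_mod k) M"
    using free_hom_hom MZ(1) M by simp
  have "mmul nM (free_hom k M v) g = h"
  proof (rule hom_free_mod_eqI[where n = nZ and \<rho> = \<rho>Z])
    show "mmul nM (free_hom k M v) g \<in> hom (free_mod k) (nZ, \<rho>Z)"
      using hom_comp[OF lift[unfolded M free_mod_eq] g] M by (simp add: free_mod_eq)
    fix j assume "j < k"
    then show "vmul (k * N) (free_gen k j) (mmul nM (free_hom k M v) g) = vmul (k * N) (free_gen k j) h"
      using free_gen_free_hom[OF _ _ v(1)] MZ(1) M v(2) by (simp add: vmul_mmul[symmetric])
  qed (use MZ Z in simp_all)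
  then show "\<exists>h'\<in>hom (free_mod k) M. mmul (fst M) h' g = h" using lift M by auto
qed

lemma free_mod_surj:
  assumes X: "is_rmod sc (p, \<rho>)"
  shows "surj_hom (free_mod p) (p, \<rho>) (free_hom p (p, \<rho>) uvec)"
  unfolding surj_hom_def
proof (intro conjI allI impI)
  show "free_hom p (p, \<rho>) uvec \<in> hom (free_mod p) (p, \<rho>)" by (rule free_hom_hom[OF X])
  fix w :: "'k rvec" assume w: "vec_on (fst (p, \<rho>)) w"
  define v where "v = (\<lambda>t. \<Sum>j<p. w j * free_gen p j t)"
  have "vec_on (p * N) v" unfolding v_def vec_on_def free_gen_def free_vec_def by auto
  moreover have "vmul (p * N) v (free_hom p (p, \<rho>) uvec) = w"
  proof (rule ext)
    fix u
    have "vmul (p * N) v (free_hom p (p, \<rho>) uvec) u = (\<Sum>j<p. w j * vmul (p * N) (free_gen p j) (free_hom p (p, \<rho>) uvec) u)"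
      unfolding v_def vmul_def by (simp add: sum_distrib_right sum_distrib_left mult.assoc) (rule sum.swap)
    also have "\<dots> = (\<Sum>j<p. w j * uvec j u)"
      by (rule sum.cong) (auto simp: free_gen_free_hom[OF X] vec_on_uvec)
    also have "\<dots> = w u"
      using w by (cases "u < p") (auto simp: uvec_def vec_on_def if_distrib[of "\<lambda>x. _ * x"] cong: if_cong)
    finally show "vmul (p * N) v (free_hom p (p, \<rho>) uvec) u = w u" .
  qed
  ultimately show "\<exists>v. vec_on (fst (free_mod p)) v \<and> vmul (fst (free_mod p)) v (free_hom p (p, \<rho>) uvec) = w"
    by (auto simp: free_mod_eq)
qed

lemma proj_free_summand:
  assumes P: "is_proj sc (p, \<rho>)"
  obtains \<epsilon> where "\<epsilon> \<in> hom (p * N, free_act p) (p * N, free_act p)" "mmul (p * N) \<epsilon> \<epsilon> = \<epsilon>"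
    "\<And>n \<sigma> U. mdim (hom_into (p, \<rho>) (n, \<sigma>) U) = mdim (hom_fixed (p * N, free_act p) (n, \<sigma>) \<epsilon> U)"
proof -
  have Pr: "is_rmod sc (p, \<rho>)" using P by (simp add: is_proj_def)
  define g where "g = free_hom p (p, \<rho>) uvec"
  have gs: "surj_hom (free_mod p) (p, \<rho>) g" unfolding g_def by (rule free_mod_surj[OF Pr])
  have g: "g \<in> hom (p * N, free_act p) (p, \<rho>)" using gs by (simp add: surj_hom_def free_mod_eq)
  obtain s where s: "s \<in> hom (p, \<rho>) (free_mod p)" "mmul (fst (free_mod p)) s g = idm p"
    using P free_mod_rmod gs idm_hom[OF Pr] unfolding is_proj_def by blast
  have sh: "s \<in> hom (p, \<rho>) (p * N, free_act p)" using s(1) by (simp add: free_mod_eq)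
  have sg: "mmul (p * N) s g = idm p" using s(2) by (simp add: free_mod_eq)
  show ?thesis
  proof
    show "mmul p g s \<in> hom (p * N, free_act p) (p * N, free_act p)"
      by (rule hom_comp[OF g sh])
    show "mmul (p * N) (mmul p g s) (mmul p g s) = mmul p g s"
      by (rule retraction_idempotent[OF hom_mat_on[OF sh] sg])
    show "mdim (hom_into (p, \<rho>) (n, \<sigma>) U) = mdim (hom_fixed (p * N, free_act p) (n, \<sigma>) (mmul p g s) U)"
      for n \<sigma> U by (rule mdim_hom_into_retract[OF g sh sg])
  qed
qed

end

lemma fd_algebra_basis_exists:
  assumes "fd_algebra (sc :: 'k::field \<Rightarrow> 'a::ring_1 \<Rightarrow> 'a)"
  shows "\<exists>bs. fd_alg_basis sc bs"
proof -
  have vs: "vector_space sc" and alg: "\<forall>c x y. sc c (x * y) = sc c x * y \<and> sc c (x * y) = x * sc c y"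
    and fin: "\<exists>B. finite B \<and> module.span sc B = UNIV"
    using assms unfolding fd_algebra_def by blast+
  interpret V: vector_space sc by (rule vs)
  obtain B where B: "finite B" "V.span B = UNIV" using fin by blast
  obtain B' where B': "B' \<subseteq> UNIV" "V.independent B'" "UNIV \<subseteq> V.span B'" "card B' = V.dim (UNIV :: 'a set)"
    by (rule V.basis_exists)
  have "finite B'" using V.independent_span_bound[OF B(1) B'(2)] B(2) by auto
  then obtain bs where bs: "set bs = B'" "distinct bs" using finite_distinct_list by blast
  have a1: "\<And>c x y. sc c (x * y) = sc c x * y" and a2: "\<And>c x y. sc c (x * y) = x * sc c y"
    using alg by blast+
  have "fd_alg_basis sc bs"
    by (rule fd_alg_basis.intro[OF vs bs(2) _ _ a1 a2]) (use bs B' in auto)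
  then show ?thesis by blast
qed

section \<open>Restriction of scalars\<close>

definition res_mod :: "('a \<Rightarrow> 'b) \<Rightarrow> ('b, 'k) rmod \<Rightarrow> ('a, 'k) rmod" where
  "res_mod f M = (fst M, \<lambda>a. snd M (f a))"

lemma res_mod_pair [simp]: "res_mod f (n, \<rho>) = (n, \<lambda>a. \<rho> (f a))"
  by (simp add: res_mod_def)

lemma res_mod_rmod:
  assumes "alg_hom sc sc' f" "is_rmod sc' (n, \<sigma>)"
  shows "is_rmod sc (n, \<lambda>a. \<sigma> (f a))"
  using assms unfolding is_rmod_def alg_hom_def by auto

lemma hom_res: "X \<in> hom (m, \<rho>) (n, \<sigma>) \<Longrightarrow> X \<in> hom (m, \<lambda>a. \<rho> (f a)) (n, \<lambda>a. \<sigma> (f a))"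
  unfolding hom_def by auto

lemma hom_res_eq: "surj f \<Longrightarrow> hom (m, \<lambda>a. \<rho> (f a)) (n, \<lambda>a. \<sigma> (f a)) = hom (m, \<rho>) (n, \<sigma>)"
  unfolding hom_def by (auto, metis surjD)

lemma submod_res: "surj f \<Longrightarrow> submod (n, \<lambda>a. \<sigma> (f a)) U = submod (n, \<sigma>) U"
  unfolding submod_def by (auto, metis surjD)

lemma iso_mod_res: "surj f \<Longrightarrow> iso_mod (res_mod f M) (res_mod f N) = iso_mod M N"
  unfolding iso_mod_def res_mod_def by (cases M, cases N) (simp add: hom_res_eq)

text \<open>\<open>Hom\<^sub>\<Lambda>(E F, M) \<cong> Hom\<^sub>\<Lambda>\<^sub>'(\<epsilon> F', M)\<close> when every \<open>F \<rightarrow> M\<close> factors through \<open>\<pi> : F \<rightarrow> F'\<close>.\<close>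

context
  fixes f :: "'a \<Rightarrow> 'b" and m m' n :: nat and \<rho>F :: "'a \<Rightarrow> 'k::field mtx"
    and \<rho>F' \<sigma> :: "'b \<Rightarrow> 'k mtx" and \<pi> \<tau> E \<epsilon> :: "'k mtx" and U :: "'k rvec set"
  assumes \<pi>: "\<pi> \<in> hom (m, \<rho>F) (m', \<lambda>a. \<rho>F' (f a))"
    and \<tau>: "mat_on m' m \<tau>" and \<tau>\<pi>: "mmul m \<tau> \<pi> = idm m'"
    and \<epsilon>: "\<epsilon> \<in> hom (m', \<rho>F') (m', \<rho>F')"
    and comm: "mmul m E \<pi> = mmul m' \<pi> \<epsilon>"
    and factor: "\<And>\<phi>. \<phi> \<in> hom (m, \<rho>F) (n, \<lambda>a. \<sigma> (f a)) \<Longrightarrow>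
      \<exists>\<phi>'\<in>hom (m', \<rho>F') (n, \<sigma>). \<phi> = mmul m' \<pi> \<phi>'"
begin

private lemma \<tau>_\<pi>_cancel: "mat_on m' c X \<Longrightarrow> mmul m \<tau> (mmul m' \<pi> X) = X"
  by (simp add: mmul_assoc[symmetric] \<tau>\<pi> mmul_idm_left)

private lemma hom_fixed_res_forward:
  assumes X: "X \<in> hom_fixed (m', \<rho>F') (n, \<sigma>) \<epsilon> U"
  shows "mmul m' \<pi> X \<in> hom_fixed (m, \<rho>F) (n, \<lambda>a. \<sigma> (f a)) E U"
proof -
  have "X \<in> hom (m', \<lambda>a. \<rho>F' (f a)) (n, \<lambda>a. \<sigma> (f a))"
    using X by (auto simp: hom_fixed_def intro: hom_res)
  then have "mmul m' \<pi> X \<in> hom (m, \<rho>F) (n, \<lambda>a. \<sigma> (f a))"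
    by (rule hom_comp[OF \<pi>])
  moreover have "mmul m E (mmul m' \<pi> X) = mmul m' \<pi> X"
    using X by (simp add: mmul_assoc[symmetric] comm) (simp add: mmul_assoc hom_fixed_def)
  moreover have "vmul m v (mmul m' \<pi> X) \<in> U" if "vec_on m v" for v
    using X vec_on_vmul[OF hom_mat_on[OF \<pi>]] by (auto simp: hom_fixed_def vmul_mmul[symmetric])
  ultimately show ?thesis by (auto simp: hom_fixed_def)
qed

private lemma hom_fixed_res_backward:
  assumes Y: "Y \<in> hom_fixed (m, \<rho>F) (n, \<lambda>a. \<sigma> (f a)) E U"
  shows "mmul m \<tau> Y \<in> hom_fixed (m', \<rho>F') (n, \<sigma>) \<epsilon> U" "mmul m' \<pi> (mmul m \<tau> Y) = Y"
proof -
  obtain X where X: "X \<in> hom (m', \<rho>F') (n, \<sigma>)" "Y = mmul m' \<pi> X"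
    using factor Y by (auto simp: hom_fixed_def)
  have Xm: "mat_on m' n X" using X(1) by (rule hom_mat_on)
  have \<tau>Y: "mmul m \<tau> Y = X" using X(2) \<tau>_\<pi>_cancel[OF Xm] by simp
  have "mmul m' \<pi> (mmul m' \<epsilon> X) = mmul m E Y"
    using X(2) by (simp add: mmul_assoc[symmetric] comm[symmetric])
  also have "\<dots> = mmul m' \<pi> X" using Y X(2) by (simp add: hom_fixed_def)
  finally have "mmul m' \<epsilon> X = X"
    using \<tau>_\<pi>_cancel[OF Xm] \<tau>_\<pi>_cancel[OF mat_on_mmul[OF hom_mat_on[OF \<epsilon>] Xm]] by metis
  moreover have "vmul m' w X \<in> U" if "vec_on m' w" for w
    using Y vec_on_vmul[OF \<tau>] by (auto simp: hom_fixed_def \<tau>Y[symmetric] vmul_mmul[symmetric])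
  ultimately show "mmul m \<tau> Y \<in> hom_fixed (m', \<rho>F') (n, \<sigma>) \<epsilon> U"
    using X(1) \<tau>Y by (simp add: hom_fixed_def)
  show "mmul m' \<pi> (mmul m \<tau> Y) = Y" using X(2) \<tau>Y by simp
qed

lemma mdim_hom_fixed_res:
  "mdim (hom_fixed (m, \<rho>F) (n, \<lambda>a. \<sigma> (f a)) E U) = mdim (hom_fixed (m', \<rho>F') (n, \<sigma>) \<epsilon> U)"
proof (rule mdim_eq_of_inverse[where k=m and A=\<tau> and k'=m' and B=\<pi>])
  show "bounded_mats (hom_fixed (m', \<rho>F') (n, \<sigma>) \<epsilon> U)"
    by (rule bounded_mats_subset[OF bounded_mats_hom]) (auto simp: hom_fixed_def)
  show "bounded_mats (hom_fixed (m, \<rho>F) (n, \<lambda>a. \<sigma> (f a)) E U)"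
    by (rule bounded_mats_subset[OF bounded_mats_hom]) (auto simp: hom_fixed_def)
  show "mmul m \<tau> (mmul m' \<pi> X) = X" if "X \<in> hom_fixed (m', \<rho>F') (n, \<sigma>) \<epsilon> U" for X
    using that by (intro \<tau>_\<pi>_cancel) (auto simp: hom_fixed_def intro: hom_mat_on)
qed (use hom_fixed_res_forward hom_fixed_res_backward in auto)

end

text \<open>The surjection \<open>\<Lambda>\<^sup>k \<rightarrow> \<Lambda>'\<^sup>k\<close> induced by \<open>f\<close> is \<open>free_proj k\<close>, with a \<open>K\<close>-linear right
  inverse \<open>free_proj_inv k\<close> built from preimages of the basis \<open>bs'\<close>.\<close>

locale alg_surj = A: fd_alg_basis sc bs + B: fd_alg_basis sc' bs'
  for sc :: "'k::field \<Rightarrow> 'a::ring_1 \<Rightarrow> 'a" and bs and sc' :: "'k \<Rightarrow> 'b::ring_1 \<Rightarrow> 'b" and bs' +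
  fixes f :: "'a \<Rightarrow> 'b"
  assumes fhom: "alg_hom sc sc' f" and fsurj: "surj f"
begin

definition free_proj :: "nat \<Rightarrow> 'k mtx" where
  "free_proj k = A.free_hom k (res_mod f (B.free_mod k)) (B.free_gen k)"

definition free_proj_inv :: "nat \<Rightarrow> 'k mtx" where
  "free_proj_inv k = (\<lambda>t. if t < k * B.N then A.free_vec k (t div B.N) (inv f (bs' ! (t mod B.N)))
     else (\<lambda>u. 0))"

lemma res_free_mod: "res_mod f (B.free_mod k) = (k * B.N, \<lambda>a. B.free_act k (f a))"
  by (simp add: B.free_mod_eq)

lemma res_free_mod_rmod: "is_rmod sc (k * B.N, \<lambda>a. B.free_act k (f a))"
  using res_mod_rmod[OF fhom, of "k * B.N" "B.free_act k"] B.free_mod_rmod[of k] by (simp add: B.free_mod_eq)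

lemma free_proj_hom: "free_proj k \<in> hom (k * A.N, A.free_act k) (k * B.N, \<lambda>a. B.free_act k (f a))"
  using A.free_hom_hom[OF res_free_mod_rmod, where k=k and w="B.free_gen k"] by (simp add: free_proj_def res_free_mod A.free_mod_eq)

lemma free_vec_free_proj: "j < k \<Longrightarrow> vmul (k * A.N) (A.free_vec k j x) (free_proj k) = B.free_vec k j (f x)"
  using A.free_vec_free_hom[OF res_free_mod_rmod, where j=j and k=k and x=x and w="B.free_gen k"] B.free_vec_mult_right[of j k 1 "f x"]
  by (simp add: free_proj_def res_free_mod B.free_gen_def)

lemma free_gen_free_proj: "vmul (k * A.N) (A.free_gen k j) (free_proj k) = B.free_gen k j"
proof (cases "j < k")
  case True
  then show ?thesis using free_vec_free_proj[OF True, of 1] using fhom by (simp add: A.free_gen_def B.free_gen_def alg_hom_def)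
next
  case False
  then show ?thesis by (simp add: A.free_gen_out B.free_gen_out)
qed

lemma free_proj_inv_mat_on: "mat_on (k * B.N) (k * A.N) (free_proj_inv k)"
  unfolding mat_on_def free_proj_inv_def A.free_vec_def by auto

lemma free_proj_inv_free_proj: "mmul (k * A.N) (free_proj_inv k) (free_proj k) = idm (k * B.N)"
proof (rule ext)
  fix t
  show "mmul (k * A.N) (free_proj_inv k) (free_proj k) t = idm (k * B.N) t"
  proof (cases "t < k * B.N")
    case True
    have j: "t div B.N < k" using True by (metis div_less_iff_less_mult B.N_pos)
    have "mmul (k * A.N) (free_proj_inv k) (free_proj k) t = B.free_vec k (t div B.N) (bs' ! (t mod B.N))"
      using True by (simp add: mmul_row free_proj_inv_def free_vec_free_proj[OF j] surj_f_inv_f[OF fsurj])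
    also have "\<dots> = uvec t" by (rule B.free_vec_basis[OF True])
    finally show ?thesis using True by (auto simp: uvec_def idm_def intro!: ext)
  next
    case False
    then show ?thesis by (auto simp: mmul_row free_proj_inv_def vmul_def idm_def intro!: ext)
  qed
qed

lemma hom_res_factor:
  assumes M: "is_rmod sc' (n, \<sigma>)" and \<phi>: "\<phi> \<in> hom (A.free_mod k) (n, \<lambda>a. \<sigma> (f a))"
  obtains \<psi> where "\<psi> \<in> hom (B.free_mod k) (n, \<sigma>)" "\<phi> = mmul (k * B.N) (free_proj k) \<psi>"
proof
  let ?\<psi> = "B.free_hom k (n, \<sigma>) (\<lambda>j. vmul (k * A.N) (A.free_gen k j) \<phi>)"
  show \<psi>: "?\<psi> \<in> hom (B.free_mod k) (n, \<sigma>)" by (rule B.free_hom_hom[OF M])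
  have "mmul (k * B.N) (free_proj k) ?\<psi> \<in> hom (A.free_mod k) (n, \<lambda>a. \<sigma> (f a))"
    using hom_comp[OF free_proj_hom hom_res[OF \<psi>[unfolded B.free_mod_eq]]] by (simp add: A.free_mod_eq)
  then show "\<phi> = mmul (k * B.N) (free_proj k) ?\<psi>"
  proof (rule A.hom_free_mod_eqI[OF res_mod_rmod[OF fhom M] \<phi>])
    fix j assume j: "j < k"
    have "vec_on n (vmul (k * A.N) (A.free_gen k j) \<phi>)"
      using vec_on_vmul[OF hom_mat_on[OF \<phi>[unfolded A.free_mod_eq]]] .
    then show "vmul (k * A.N) (A.free_gen k j) \<phi>
        = vmul (k * A.N) (A.free_gen k j) (mmul (k * B.N) (free_proj k) ?\<psi>)"
      using B.free_gen_free_hom[OF M j] by (simp add: vmul_mmul[symmetric] free_gen_free_proj)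
  qed
qed

lemma free_proj_surj: "surj_hom (A.free_mod k) (res_mod f (B.free_mod k)) (free_proj k)"
  unfolding surj_hom_def
proof (intro conjI allI impI)
  show "free_proj k \<in> hom (A.free_mod k) (res_mod f (B.free_mod k))" using free_proj_hom by (simp add: A.free_mod_eq res_free_mod)
  fix w :: "'k rvec" assume w: "vec_on (fst (res_mod f (B.free_mod k))) w"
  then have w': "vec_on (k * B.N) w" by (simp add: res_free_mod)
  have "vec_on (k * A.N) (vmul (k * B.N) w (free_proj_inv k))" by (rule vec_on_vmul[OF free_proj_inv_mat_on])
  moreover have "vmul (k * A.N) (vmul (k * B.N) w (free_proj_inv k)) (free_proj k) = w"
    by (simp add: vmul_mmul free_proj_inv_free_proj vmul_idm[OF w'])
  ultimately show "\<exists>v. vec_on (fst (A.free_mod k)) v \<and> vmul (fst (A.free_mod k)) v (free_proj k) = w"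
    by (auto simp: A.free_mod_eq)
qed

lemma mdim_hom_fixed_free_res:
  assumes M: "is_rmod sc' (n, \<sigma>)"
    and \<epsilon>: "\<epsilon> \<in> hom (k * B.N, B.free_act k) (k * B.N, B.free_act k)"
    and comm: "mmul (k * A.N) E (free_proj k) = mmul (k * B.N) (free_proj k) \<epsilon>"
  shows "mdim (hom_fixed (k * A.N, A.free_act k) (n, \<lambda>a. \<sigma> (f a)) E U)
       = mdim (hom_fixed (k * B.N, B.free_act k) (n, \<sigma>) \<epsilon> U)"
proof (rule mdim_hom_fixed_res[OF free_proj_hom free_proj_inv_mat_on free_proj_inv_free_proj \<epsilon> comm])
  fix \<phi> assume "\<phi> \<in> hom (k * A.N, A.free_act k) (n, \<lambda>a. \<sigma> (f a))"
  then show "\<exists>\<phi>'\<in>hom (k * B.N, B.free_act k) (n, \<sigma>). \<phi> = mmul (k * B.N) (free_proj k) \<phi>'"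
    using hom_res_factor[OF M, of \<phi> k] by (metis A.free_mod_eq B.free_mod_eq)
qed

lemma idempotent_endo_lift:
  assumes \<epsilon>: "\<epsilon> \<in> hom (k * B.N, B.free_act k) (k * B.N, B.free_act k)" and idem: "mmul (k * B.N) \<epsilon> \<epsilon> = \<epsilon>"
  obtains E where "E \<in> hom (k * A.N, A.free_act k) (k * A.N, A.free_act k)" "mmul (k * A.N) E E = E"
    "mmul (k * A.N) E (free_proj k) = mmul (k * B.N) (free_proj k) \<epsilon>"
proof -
  have "mmul (k * B.N) (free_proj k) \<epsilon> \<in> hom (A.free_mod k) (res_mod f (B.free_mod k))"
    using hom_comp[OF free_proj_hom hom_res[OF \<epsilon>]] by (simp add: A.free_mod_eq res_free_mod)
  then obtain L where L: "L \<in> hom (A.free_mod k) (A.free_mod k)"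
    "mmul (fst (A.free_mod k)) L (free_proj k) = mmul (k * B.N) (free_proj k) \<epsilon>"
    using A.free_mod_proj free_proj_surj res_free_mod_rmod A.free_mod_rmod unfolding is_proj_def
    by (metis res_free_mod)
  have Lh: "L \<in> hom (k * A.N, A.free_act k) (k * A.N, A.free_act k)" using L(1) by (simp add: A.free_mod_eq)
  obtain p where p: "mmul (k * A.N) (mat_poly (k * A.N) p L) (mat_poly (k * A.N) p L) = mat_poly (k * A.N) p L"
    "mmul (k * A.N) (mat_poly (k * A.N) p L) (free_proj k) = mmul (k * B.N) (free_proj k) \<epsilon>"
    using idempotent_lift[OF hom_mat_on[OF Lh] hom_mat_on[OF \<epsilon>] hom_mat_on[OF free_proj_hom] idem]
      L(2) by (metis A.free_mod_eq fst_conv)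
  moreover have "mat_poly (k * A.N) p L \<in> hom (k * A.N, A.free_act k) (k * A.N, A.free_act k)"
    using A.free_mod_rmod[of k] by (intro mat_poly_hom[OF _ Lh]) (simp add: A.free_mod_eq)
  ultimately show ?thesis using that by blast
qed

lemma idempotent_endo_descend:
  assumes E: "E \<in> hom (k * A.N, A.free_act k) (k * A.N, A.free_act k)" and idem: "mmul (k * A.N) E E = E"
  obtains \<epsilon> where "\<epsilon> \<in> hom (k * B.N, B.free_act k) (k * B.N, B.free_act k)" "mmul (k * B.N) \<epsilon> \<epsilon> = \<epsilon>"
    "mmul (k * A.N) E (free_proj k) = mmul (k * B.N) (free_proj k) \<epsilon>"
proof -
  let ?m = "k * A.N" and ?m' = "k * B.N"
  have Bk: "is_rmod sc' (?m', B.free_act k)" using B.free_mod_rmod[of k] by (simp add: B.free_mod_eq)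
  have "mmul ?m E (free_proj k) \<in> hom (A.free_mod k) (?m', \<lambda>a. B.free_act k (f a))"
    using hom_comp[OF E free_proj_hom] by (simp add: A.free_mod_eq)
  from hom_res_factor[OF Bk this] obtain \<epsilon>
    where \<epsilon>: "\<epsilon> \<in> hom (?m', B.free_act k) (?m', B.free_act k)"
      and comm: "mmul ?m E (free_proj k) = mmul ?m' (free_proj k) \<epsilon>"
    by (metis B.free_mod_eq)
  have "mmul ?m' (free_proj k) (mmul ?m' \<epsilon> \<epsilon>) = mmul ?m' (mmul ?m E (free_proj k)) \<epsilon>"
    by (simp add: mmul_assoc[symmetric] comm)
  also have "\<dots> = mmul ?m E (mmul ?m E (free_proj k))"
    by (simp add: mmul_assoc comm[symmetric])
  also have "\<dots> = mmul ?m (mmul ?m E E) (free_proj k)"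
    by (simp add: mmul_assoc)
  also have "\<dots> = mmul ?m' (free_proj k) \<epsilon>" by (simp add: idem comm)
  finally have "mmul ?m (free_proj_inv k) (mmul ?m' (free_proj k) (mmul ?m' \<epsilon> \<epsilon>))
      = mmul ?m (free_proj_inv k) (mmul ?m' (free_proj k) \<epsilon>)" by simp
  then have "mmul ?m' \<epsilon> \<epsilon> = \<epsilon>"
    using hom_mat_on[OF \<epsilon>] mat_on_mmul[OF hom_mat_on[OF \<epsilon>] hom_mat_on[OF \<epsilon>]]
    by (simp add: mmul_assoc[symmetric] free_proj_inv_free_proj mmul_idm_left)
  then show ?thesis using that \<epsilon> comm by blast
qed

end
section \<open>Corresponding projectives and stable modules\<close>

context alg_surj
begin

definition proj_corresp :: "('a, 'k) rmod \<Rightarrow> ('b, 'k) rmod \<Rightarrow> bool" where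
  "proj_corresp P P' \<longleftrightarrow> is_proj sc P \<and> is_proj sc' P' \<and>
     (\<forall>n \<sigma> U. is_rmod sc' (n, \<sigma>) \<longrightarrow>
        mdim (hom_into P (n, \<lambda>a. \<sigma> (f a)) U) = mdim (hom_into P' (n, \<sigma>) U))"

lemma proj_corresp_of_summands:
  assumes \<epsilon>: "\<epsilon> \<in> hom (k * B.N, B.free_act k) (k * B.N, B.free_act k)"
    and comm: "mmul (k * A.N) E (free_proj k) = mmul (k * B.N) (free_proj k) \<epsilon>"
    and P: "is_proj sc P" "\<And>n \<sigma> U. mdim (hom_into P (n, \<sigma>) U) = mdim (hom_fixed (k * A.N, A.free_act k) (n, \<sigma>) E U)"
    and P': "is_proj sc' P'" "\<And>n \<sigma> U. mdim (hom_into P' (n, \<sigma>) U) = mdim (hom_fixed (k * B.N, B.free_act k) (n, \<sigma>) \<epsilon> U)"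
  shows "proj_corresp P P'"
  unfolding proj_corresp_def using P P' mdim_hom_fixed_free_res[OF _ \<epsilon> comm] by simp

lemma proj_lift:
  assumes "is_proj sc' P'"
  obtains P where "proj_corresp P P'"
proof -
  obtain p \<rho> where P': "P' = (p, \<rho>)" by fastforce
  obtain \<epsilon> where \<epsilon>: "\<epsilon> \<in> hom (p * B.N, B.free_act p) (p * B.N, B.free_act p)" "mmul (p * B.N) \<epsilon> \<epsilon> = \<epsilon>"
    "\<And>n \<sigma> U. mdim (hom_into P' (n, \<sigma>) U) = mdim (hom_fixed (p * B.N, B.free_act p) (n, \<sigma>) \<epsilon> U)"
    using B.proj_free_summand assms P' by blast
  obtain E where E: "E \<in> hom (p * A.N, A.free_act p) (p * A.N, A.free_act p)" "mmul (p * A.N) E E = E"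
    "mmul (p * A.N) E (free_proj p) = mmul (p * B.N) (free_proj p) \<epsilon>"
    using idempotent_endo_lift[OF \<epsilon>(1,2)] by blast
  obtain P where "is_proj sc P"
    "\<And>n \<sigma> U. mdim (hom_into P (n, \<sigma>) U) = mdim (hom_fixed (p * A.N, A.free_act p) (n, \<sigma>) E U)"
    using idempotent_summand_proj[OF A.free_mod_proj[unfolded A.free_mod_eq] E(1,2)] by blast
  then show ?thesis
    using that proj_corresp_of_summands[OF \<epsilon>(1) E(3)] assms \<epsilon>(3) by blast
qed

lemma proj_base_change:
  assumes "is_proj sc P"
  obtains P' where "proj_corresp P P'"
proof -
  obtain r \<rho> where P: "P = (r, \<rho>)" by fastforce
  obtain E where E: "E \<in> hom (r * A.N, A.free_act r) (r * A.N, A.free_act r)" "mmul (r * A.N) E E = E"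
    "\<And>n \<sigma> U. mdim (hom_into P (n, \<sigma>) U) = mdim (hom_fixed (r * A.N, A.free_act r) (n, \<sigma>) E U)"
    using A.proj_free_summand assms P by blast
  obtain \<epsilon> where \<epsilon>: "\<epsilon> \<in> hom (r * B.N, B.free_act r) (r * B.N, B.free_act r)" "mmul (r * B.N) \<epsilon> \<epsilon> = \<epsilon>"
    "mmul (r * A.N) E (free_proj r) = mmul (r * B.N) (free_proj r) \<epsilon>"
    using idempotent_endo_descend[OF E(1,2)] by blast
  obtain P' where "is_proj sc' P'"
    "\<And>n \<sigma> U. mdim (hom_into P' (n, \<sigma>) U) = mdim (hom_fixed (r * B.N, B.free_act r) (n, \<sigma>) \<epsilon> U)"
    using idempotent_summand_proj[OF B.free_mod_proj[unfolded B.free_mod_eq] \<epsilon>(1,2)] by blast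
  then show ?thesis
    using that proj_corresp_of_summands[OF \<epsilon>(1,3)] assms E(3) by blast
qed

lemma pairing_res:
  assumes "proj_corresp P P'" "proj_corresp Q Q'" "is_rmod sc' (n, \<sigma>)"
  shows "pairing (P, Q) (n, \<lambda>a. \<sigma> (f a)) = pairing (P', Q') (n, \<sigma>)"
  using assms unfolding proj_corresp_def pairing_def by (simp add: hom_into_UNIV[symmetric])

lemma pairing_sub_res:
  assumes "proj_corresp P P'" "proj_corresp Q Q'" "is_rmod sc' (n, \<sigma>)"
  shows "pairing_sub (P, Q) (n, \<lambda>a. \<sigma> (f a)) U = pairing_sub (P', Q') (n, \<sigma>) U"
  using assms unfolding proj_corresp_def pairing_sub_def by simp

lemma theta_stable_res:
  assumes "proj_corresp P P'" "proj_corresp Q Q'" "theta_stable sc' (P', Q') (n, \<sigma>)"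
  shows "theta_stable sc (P, Q) (n, \<lambda>a. \<sigma> (f a))"
proof -
  have M: "is_rmod sc' (n, \<sigma>)" using assms(3) by (simp add: theta_stable_def)
  show ?thesis
    using assms(3) res_mod_rmod[OF fhom M] pairing_res[OF assms(1,2) M] pairing_sub_res[OF assms(1,2) M]
    unfolding theta_stable_def by (simp add: submod_res[OF fsurj])
qed

definition res_dimvec :: "(('b, 'k) rmod \<Rightarrow> nat) \<Rightarrow> ('a, 'k) rmod \<Rightarrow> nat" where
  "res_dimvec d' R = (if is_proj sc R then d' (SOME R'. proj_corresp R R') else 0)"

lemma dimvec_res:
  assumes "is_rmod sc' (n, \<sigma>)"
  shows "dimvec sc (n, \<lambda>a. \<sigma> (f a)) = res_dimvec (dimvec sc' (n, \<sigma>))"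
proof
  fix R
  show "dimvec sc (n, \<lambda>a. \<sigma> (f a)) R = res_dimvec (dimvec sc' (n, \<sigma>)) R"
  proof (cases "is_proj sc R")
    case True
    define R' where "R' = (SOME R'. proj_corresp R R')"
    have "proj_corresp R R'"
      unfolding R'_def using proj_base_change[OF True] by (metis someI)
    then have "is_proj sc' R'" "mdim (hom R (n, \<lambda>a. \<sigma> (f a))) = mdim (hom R' (n, \<sigma>))"
      using assms unfolding proj_corresp_def by (metis hom_into_UNIV)+
    then show ?thesis
      using True unfolding dimvec_def res_dimvec_def R'_def[symmetric] by simp
  qed (simp add: dimvec_def res_dimvec_def)
qed

text \<open>Restriction maps the \<open>\<theta>'\<close>-stable classes into the \<open>\<theta>\<close>-stable classes, and a class is
  recovered from its image as the set of \<open>\<Lambda>'\<close>-modules whose restriction lies in it.\<close>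

lemma infinite_stable_classes_res:
  assumes "proj_corresp P P'" "proj_corresp Q Q'" "infinite (stable_classes sc' (P', Q') d')"
  shows "infinite (stable_classes sc (P, Q) (res_dimvec d'))"
proof
  let ?cls = "\<lambda>M. {N. is_rmod sc N \<and> iso_mod M N}"
  let ?cls' = "\<lambda>M. {N. is_rmod sc' N \<and> iso_mod M N}"
  let ?lift = "\<lambda>K. {N. is_rmod sc' N \<and> res_mod f N \<in> K}"
  assume "finite (stable_classes sc (P, Q) (res_dimvec d'))"
  then have "finite (?lift ` stable_classes sc (P, Q) (res_dimvec d'))" by (rule finite_imageI)
  moreover have "stable_classes sc' (P', Q') d' \<subseteq> ?lift ` stable_classes sc (P, Q) (res_dimvec d')"
  proof
    fix K assume "K \<in> stable_classes sc' (P', Q') d'"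
    then obtain n \<sigma> where M: "theta_stable sc' (P', Q') (n, \<sigma>)" "dimvec sc' (n, \<sigma>) = d'"
      "K = ?cls' (n, \<sigma>)"
      unfolding stable_classes_def by auto
    have Mr: "is_rmod sc' (n, \<sigma>)" using M(1) by (simp add: theta_stable_def)
    have "res_mod f (n, \<sigma>) \<in> {M. theta_stable sc (P, Q) M \<and> dimvec sc M = res_dimvec d'}"
      using theta_stable_res[OF assms(1,2) M(1)] dimvec_res[OF Mr] M(2) by simp
    moreover have "K = ?lift (?cls (res_mod f (n, \<sigma>)))"
    proof (rule set_eqI)
      fix N :: "('b, 'k) rmod"
      obtain a b where N: "N = (a, b)" by fastforce
      show "N \<in> K \<longleftrightarrow> N \<in> ?lift (?cls (res_mod f (n, \<sigma>)))"
        using M(3) iso_mod_res[OF fsurj, of "(n, \<sigma>)" N] res_mod_rmod[OF fhom, of a b] N by auto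
    qed
    ultimately show "K \<in> ?lift ` stable_classes sc (P, Q) (res_dimvec d')"
      unfolding stable_classes_def by blast
  qed
  ultimately show False using assms(3) finite_subset by blast
qed

end

theorem proposition3p8:
  fixes sc :: "'k::alg_closed_field \<Rightarrow> 'a::ring_1 \<Rightarrow> 'a"
    and sc' :: "'k \<Rightarrow> 'b::ring_1 \<Rightarrow> 'b"
    and f :: "'a \<Rightarrow> 'b"
  assumes "fd_algebra sc" and "fd_algebra sc'"
    and "alg_hom sc sc' f" and "surj f"
    and "\<exists>d' \<theta>'. is_K0proj sc' \<theta>' \<and> infinite (stable_classes sc' \<theta>' d')"
  shows "\<exists>d \<theta>. is_K0proj sc \<theta> \<and> infinite (stable_classes sc \<theta> d)"
proof -
  obtain bs bs' where "fd_alg_basis sc bs" "fd_alg_basis sc' bs'"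
    using fd_algebra_basis_exists[OF assms(1)] fd_algebra_basis_exists[OF assms(2)] by blast
  then interpret alg_surj sc bs sc' bs' f
    using assms(3,4) by (simp add: alg_surj_def alg_surj_axioms_def)
  obtain d' P' Q' where "is_proj sc' P'" "is_proj sc' Q'"
    and stable': "infinite (stable_classes sc' (P', Q') d')"
    using assms(5) unfolding is_K0proj_def by auto
  then obtain P Q where P: "proj_corresp P P'" and Q: "proj_corresp Q Q'"
    by (metis proj_lift)
  have "is_K0proj sc (P, Q)"
    using P Q by (simp add: proj_corresp_def is_K0proj_def)
  then show ?thesis
    using infinite_stable_classes_res[OF P Q stable'] by blast
qed

end
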